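(* Consider the D-EX$(\zeta_n)$ model described in the context, and suppose $\lim_{n\to\infty}\zeta_n=\zeta\in(0,1)$. Then for every $z\in D_\zeta$, \[ \lim_{n\to\infty}\frac{V_n(z)}{n}=\frac{t(z\mid\zeta)}{\alpha}-(1-\zeta)\quad\text{almost surely}, \qquad \lim_{n\to\infty}\frac{V_n(z)}{R_n(z)\vee 1}=1-\frac{\alpha(1-\zeta)}{t(z\mid\zeta)}\quad\text{almost surely}. \]
   Context: Setting (D-EX$(\zeta_n)$ model). Fix $\alpha\in(0,1)$. Let $\mathcal X,\mathcal Z,\mathcal T\subseteq\mathbb R$ be intervals. Let $Z$ be a real random variable with values in $\mathcal Z$, continuous c.d.f. $W_Z$ and distribution $P^Z$, and, for each $n$, let $X_1,\dots,X_n$ be independent real random variables with values in $\mathcal X$, independent of $Z$. Let $g:\mathcal X\times\mathcal Z\to\mathcal T$ be continuous, strictly increasing in its first argument and either strictly monotone or constant in its second argument; let $g_1$ be its inverse in the first argument ($g(x,z)=w$ iff $x=g_1(w,z)$) and, if $g$ is strictly monotone in the second argument, $g_2$ its inverse in the second argument ($g(x,z)=w$ iff $z=g_2(x,w)$). The test statistics are $T_i=g(X_i,Z)$ for the hypotheses $H_i:\vartheta_i=0$ versus $K_i:\vartheta_i>0$. When $H_i$ is true, $X_i$ has a continuous c.d.f. $W_X$ and $T_i$ has c.d.f. $W_T$. Given $Z=z$, the $p$-values are $p_i(z)=1-W_T(g(X_i,z))$. Define $F_\infty(t\mid z)=1-W_X\big(g_1(W_T^{-1}(1-t),z)\big)$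 for $t\in(0,1)$; it is assumed that for every $z\in\mathcal Z$, $F_\infty(\cdot\mid z)$ is continuous on $[0,1]$, $F_\infty(0\mid z)=0$ and $F_\infty(\cdot\mid z)$ is differentiable from the right at $0$. In the D-EX$(\zeta_n)$ model, for each $n$ exactly $n_0$ of the $n$ hypotheses are true, $\zeta_n=n_0/n$, and each of the remaining $n-n_0$ (false) hypotheses has $\vartheta_i=\infty$, in which case its $p$-value equals $0$ almost surely. Linear step-up procedure (LSU) at level $\alpha$: with ordered $p$-values $p_{1:n}\le\dots\le p_{n:n}$ let $m=\max\{i: p_{i:n}\le i\alpha/n\}$ and reject all $H_i$ with $p_i\le m\alpha/n$ (nothing if no such $i$ exists). $V_n$ is the number of rejected true hypotheses, $R_n$ the total number of rejections; $V_n(z),R_n(z)$ denote these quantities when $Z=z$ is given. Let $F_\infty(t\mid z,\zeta)=(1-\zeta)+\zeta F_\infty(t\mid z)$ and $t(z\mid\zeta)=\sup\{t\in[\alpha(1-\zeta),\alpha]: F_\infty(t\mid z,\zeta)=t/\alpha\}$. The point $t(z\mid\zeta)$ is called a largest crossing point (LCP) if there is $\epsilon>0$ with $F_\infty(t\mid z,\zeta)>t/\alpha$ for $t\in[t(z\mid\zeta)-\epsilon,t(z\mid\zeta))$ and $F_\infty(t\mid z,\zeta)<t/\alpha$ for $t\in(t(z\mid\zeta),t(z\mid\zeta)+\epsilon]$. $C_\zeta$ is the set of LCPs and $D_\zeta=\{z\in\mathcal Z: t(z\mid\zeta)\in C_\zeta\}$. Standing assumption: $P^Z(D_\zeta)=1$.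 *)

theory Defs
  imports "HOL-Probability.Probability"
begin

text \<open>Linear step-up procedure at level alpha applied to the p-values p 0, ..., p (n-1).
  lsu_num is m = max {i. p_(i:n) <= i alpha / n} (0 if there is no such i), where
  p_(i:n) is the i-th smallest p-value.\<close>
definition lsu_num :: "real \<Rightarrow> nat \<Rightarrow> (nat \<Rightarrow> real) \<Rightarrow> nat" where
  "lsu_num \<alpha> n p =
     (let ps = sort (map p [0..<n])
      in Max (insert 0 {k \<in> {1..n}. ps ! (k - 1) \<le> real k * \<alpha> / real n}))"

definition lsu_rejected :: "real \<Rightarrow> nat \<Rightarrow> (nat \<Rightarrow> real) \<Rightarrow> nat set" where
  "lsu_rejected \<alpha> n p =
     {i. i < n \<and> 0 < lsu_num \<alpha> n p \<and> p i \<le> real (lsu_num \<alpha> n p) * \<alpha> / real n}"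

definition cdf_inv :: "(real \<Rightarrow> real) \<Rightarrow> real \<Rightarrow> real" where
  "cdf_inv W u = Inf {w. u \<le> W w}"

definition pvalue :: "(real \<Rightarrow> real) \<Rightarrow> (real \<Rightarrow> real \<Rightarrow> real) \<Rightarrow> real \<Rightarrow> real \<Rightarrow> real" where
  "pvalue WT g x z = 1 - WT (g x z)"

definition Finf :: "(real \<Rightarrow> real) \<Rightarrow> (real \<Rightarrow> real) \<Rightarrow> (real \<Rightarrow> real \<Rightarrow> real) \<Rightarrow> real \<Rightarrow> real \<Rightarrow> real" where
  "Finf WX WT g1 z t = 1 - WX (g1 (cdf_inv WT (1 - t)) z)"

definition Fmix :: "(real \<Rightarrow> real) \<Rightarrow> real \<Rightarrow> real \<Rightarrow> real" where
  "Fmix F \<zeta> t = (1 - \<zeta>) + \<zeta> * F t"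

definition tcross :: "real \<Rightarrow> (real \<Rightarrow> real) \<Rightarrow> real \<Rightarrow> real" where
  "tcross \<alpha> F \<zeta> = Sup {t \<in> {\<alpha> * (1 - \<zeta>)..\<alpha>}. Fmix F \<zeta> t = t / \<alpha>}"

definition is_LCP :: "real \<Rightarrow> (real \<Rightarrow> real) \<Rightarrow> real \<Rightarrow> bool" where
  "is_LCP \<alpha> F \<zeta> =
     (\<exists>\<epsilon>>0. (\<forall>t\<in>{tcross \<alpha> F \<zeta> - \<epsilon>..<tcross \<alpha> F \<zeta>}. Fmix F \<zeta> t > t / \<alpha>) \<and>
            (\<forall>t\<in>{tcross \<alpha> F \<zeta><..tcross \<alpha> F \<zeta> + \<epsilon>}. Fmix F \<zeta> t < t / \<alpha>))"

definition Dset :: "real \<Rightarrow> (real \<Rightarrow> real \<Rightarrow> real) \<Rightarrow> real \<Rightarrow> real set \<Rightarrow> real set" where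
  "Dset \<alpha> F \<zeta> Zs = {z \<in> Zs. is_LCP \<alpha> (F z) \<zeta>}"

end

theory Submission
  imports Defs
begin

text \<open>
  Given Z = z, the p-values of the false hypotheses vanish and those of the true ones are
  independent with the common distribution function F_inf(. | z).  A strong law of large numbers
  for triangular arrays (Hoeffding's inequality and Borel-Cantelli) shows that, almost surely,
  the proportion among all n p-values of true-null p-values below t converges to
  zeta F_inf(t | z) for all rational t, hence for all t by monotonicity and continuity.  The
  step-up threshold m alpha / n is the largest crossing of the empirical distribution function
  of the p-values with the line t / alpha; as this function converges pointwise to
  F_inf(t | z, zeta), which crosses t / alpha from above at its largest crossing point
  t(z | zeta), the threshold converges to t(z | zeta).  Consequently V_n / n tends to
  zeta F_inf(t(z | zeta) | z) = t(z | zeta) / alpha - (1 - zeta) and R_n / n to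
  t(z | zeta) / alpha.

  The identification of the conditional p-value distribution with F_inf is immediate where the
  critical value of the test is attained by g(., z).  Since g_1 is only determined on the range
  of g, the remaining degenerate cases are excluded using the continuity of F_inf(. | z) with
  F_inf(0 | z) = 0, the continuity of the conditional law in z, and the fact that the
  unconditional p-value is uniformly distributed.

  The hypotheses on g_2 and W_Z, the standing assumption P^Z(D_zeta) = 1 and the
  differentiability of F_inf(. | z) at 0 are not needed.
\<close>

section \<open>The step-up procedure in counting form\<close>

lemma sorted_nth_le_iff:
  fixes ps :: "real list"
  assumes "sorted ps" "j < length ps"
  shows "ps ! j \<le> x \<longleftrightarrow> j < length (filter (\<lambda>y. y \<le> x) ps)"
proof -
  have L: "length (filter (\<lambda>y. y \<le> x) ps) = card {i. i < length ps \<and> ps!i \<le> x}"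
    by (rule length_filter_conv_card)
  show ?thesis
  proof
    assume h: "ps!j \<le> x"
    have "{..j} \<subseteq> {i. i < length ps \<and> ps!i \<le> x}"
      using sorted_nth_mono[OF assms(1)] assms(2) h by fastforce
    then have "card {..j} \<le> card {i. i < length ps \<and> ps!i \<le> x}"
      by (intro card_mono) auto
    then show "j < length (filter (\<lambda>y. y \<le> x) ps)" using L by simp
  next
    assume h: "j < length (filter (\<lambda>y. y \<le> x) ps)"
    show "ps!j \<le> x"
    proof (rule ccontr)
      assume "\<not> ps!j \<le> x"
      then have "{i. i < length ps \<and> ps!i \<le> x} \<subseteq> {..<j}"
        using sorted_nth_mono[OF assms(1)] by (force simp: not_le)
      then have "card {i. i < length ps \<and> ps!i \<le> x} \<le> card {..<j}"
        by (intro card_mono) auto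
      then show False using h L by simp
    qed
  qed
qed

lemma length_filter_sort: "length (filter P (sort xs)) = length (filter P xs)"
  by (metis mset_filter mset_sort size_mset)

lemma lsu_num_eq_Max_card:
  "lsu_num \<alpha> n p = Max (insert 0 {k\<in>{1..n}. k \<le> card {i. i < n \<and> p i \<le> real k * \<alpha> / real n}})"
proof -
  define ps where "ps = sort (map p [0..<n])"
  have sorted: "sorted ps" and len: "length ps = n" by (auto simp: ps_def)
  have count: "length (filter (\<lambda>y. y \<le> x) ps) = card {i. i < n \<and> p i \<le> x}" for x
    unfolding ps_def length_filter_sort
    by (simp add: length_filter_conv_card) (rule arg_cong[where f=card], auto)
  have "{k\<in>{1..n}. ps ! (k - 1) \<le> real k * \<alpha> / real n} =
        {k\<in>{1..n}. k \<le> card {i. i < n \<and> p i \<le> real k * \<alpha> / real n}}"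
  proof (intro Collect_cong conj_cong refl)
    fix k assume k: "k \<in> {1..n}"
    then show "ps ! (k - 1) \<le> real k * \<alpha> / real n
        \<longleftrightarrow> k \<le> card {i. i < n \<and> p i \<le> real k * \<alpha> / real n}"
      using sorted_nth_le_iff[OF sorted, of "k - 1"] count len by auto
  qed
  then show ?thesis unfolding lsu_num_def Let_def ps_def by simp
qed

definition lsu_threshold :: "real \<Rightarrow> nat \<Rightarrow> (nat \<Rightarrow> real) \<Rightarrow> real" where
  "lsu_threshold \<alpha> n p = real (lsu_num \<alpha> n p) * \<alpha> / real n"

lemma lsu_num_le: "lsu_num \<alpha> n p \<le> n"
  unfolding lsu_num_eq_Max_card by (subst Max_le_iff) auto

lemma le_lsu_num:
  assumes "1 \<le> k" "k \<le> n" "k \<le> card {i. i < n \<and> p i \<le> real k * \<alpha> / real n}"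
  shows "k \<le> lsu_num \<alpha> n p"
  unfolding lsu_num_eq_Max_card using assms by (intro Max_ge) auto

lemma lsu_num_le_card:
  assumes "0 < lsu_num \<alpha> n p"
  shows "lsu_num \<alpha> n p \<le> card {i. i < n \<and> p i \<le> lsu_threshold \<alpha> n p}"
proof -
  let ?K = "{k\<in>{1..n}. k \<le> card {i. i < n \<and> p i \<le> real k * \<alpha> / real n}}"
  have "lsu_num \<alpha> n p \<in> insert 0 ?K"
    unfolding lsu_num_eq_Max_card by (intro Max_in) auto
  then show ?thesis using assms by (auto simp: lsu_threshold_def)
qed

lemma lsu_threshold_le: "0 \<le> \<alpha> \<Longrightarrow> lsu_threshold \<alpha> n p \<le> \<alpha>"
  using lsu_num_le[of \<alpha> n p]
  by (auto simp: lsu_threshold_def divide_le_eq mult.commute intro: mult_left_mono)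

lemma lsu_rejected_eq:
  assumes "0 < lsu_threshold \<alpha> n p"
  shows "lsu_rejected \<alpha> n p = {i. i < n \<and> p i \<le> lsu_threshold \<alpha> n p}"
proof -
  have "0 < lsu_num \<alpha> n p"
    using assms by (cases "lsu_num \<alpha> n p") (auto simp: lsu_threshold_def)
  then show ?thesis by (auto simp: lsu_rejected_def lsu_threshold_def)
qed

section \<open>Largest crossing points\<close>

lemma continuous_on_Fmix: "continuous_on A F \<Longrightarrow> continuous_on A (Fmix F \<zeta>)"
  unfolding Fmix_def[abs_def] by (intro continuous_intros)

lemma tcross_crossing:
  fixes F :: "real \<Rightarrow> real"
  assumes alpha: "0 < \<alpha>" "\<alpha> < 1" and zeta: "0 < \<zeta>" "\<zeta> < 1"
    and cont: "continuous_on {0<..<1} F"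
    and bounds: "\<And>t. t \<in> {0<..<1} \<Longrightarrow> 0 \<le> F t \<and> F t \<le> 1"
  shows "\<alpha> * (1 - \<zeta>) \<le> tcross \<alpha> F \<zeta>" "tcross \<alpha> F \<zeta> \<le> \<alpha>"
    and "Fmix F \<zeta> (tcross \<alpha> F \<zeta>) = tcross \<alpha> F \<zeta> / \<alpha>"
    and "\<And>t. t \<in> {\<alpha> * (1 - \<zeta>)..\<alpha>} \<Longrightarrow> Fmix F \<zeta> t = t / \<alpha> \<Longrightarrow> t \<le> tcross \<alpha> F \<zeta>"
proof -
  define a where "a = \<alpha> * (1 - \<zeta>)"
  define f where "f t = Fmix F \<zeta> t - t / \<alpha>" for t
  define S where "S = {t \<in> {a..\<alpha>}. f t = 0}"
  have a: "0 < a" "a < \<alpha>" using alpha zeta by (auto simp: a_def)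
  have "continuous_on {0<..<1} f"
    unfolding f_def[abs_def] by (intro continuous_intros continuous_on_Fmix cont) (use alpha in auto)
  then have f_cont: "continuous_on {a..\<alpha>} f"
    by (rule continuous_on_subset) (use a alpha in auto)
  have tcross_S: "tcross \<alpha> F \<zeta> = Sup S"
    unfolding tcross_def S_def f_def a_def by (rule arg_cong[where f=Sup]) auto
  \<comment> \<open>at the left end point f equals \<zeta> F a \<ge> 0, at the right end point \<zeta> (F \<alpha> - 1) \<le> 0\<close>
  have "0 \<le> F a" using bounds[of a] a alpha by auto
  then have "0 \<le> f a" using alpha zeta by (simp add: f_def Fmix_def a_def)
  moreover have "f \<alpha> \<le> 0" using bounds[of \<alpha>] alpha zeta by (simp add: f_def Fmix_def)
  ultimately obtain x where "a \<le> x" "x \<le> \<alpha>" "f x = 0"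
    using IVT2'[of f \<alpha> 0 a, OF _ _ _ f_cont] a by auto
  then have "S \<noteq> {}" unfolding S_def by auto
  moreover have bdd: "bdd_above S" unfolding S_def by (auto intro: bdd_aboveI[of _ \<alpha>])
  moreover have "closed S"
    unfolding S_def by (rule continuous_closed_preimage_constant[OF f_cont]) auto
  ultimately have "tcross \<alpha> F \<zeta> \<in> S" unfolding tcross_S by (rule closed_contains_Sup)
  then show "\<alpha> * (1 - \<zeta>) \<le> tcross \<alpha> F \<zeta>" "tcross \<alpha> F \<zeta> \<le> \<alpha>"
    "Fmix F \<zeta> (tcross \<alpha> F \<zeta>) = tcross \<alpha> F \<zeta> / \<alpha>"
    unfolding S_def f_def a_def by auto
  show "t \<le> tcross \<alpha> F \<zeta>" if "t \<in> {\<alpha> * (1 - \<zeta>)..\<alpha>}" "Fmix F \<zeta> t = t / \<alpha>" for t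
    unfolding tcross_S using that by (intro cSup_upper[OF _ bdd]) (auto simp: S_def f_def a_def)
qed

lemma Fmix_less_after_tcross:
  fixes F :: "real \<Rightarrow> real"
  assumes alpha: "0 < \<alpha>" "\<alpha> < 1" and zeta: "0 < \<zeta>" "\<zeta> < 1"
    and cont: "continuous_on {0<..<1} F"
    and bounds: "\<And>t. t \<in> {0<..<1} \<Longrightarrow> 0 \<le> F t \<and> F t \<le> 1"
    and lcp: "is_LCP \<alpha> F \<zeta>"
    and t: "tcross \<alpha> F \<zeta> < t" "t \<le> \<alpha>"
  shows "Fmix F \<zeta> t < t / \<alpha>"
proof -
  define ts where "ts = tcross \<alpha> F \<zeta>"
  note crossing = tcross_crossing[OF alpha zeta cont bounds, folded ts_def]
  obtain \<epsilon> where "\<epsilon> > 0" and right: "\<And>s. s \<in> {ts<..ts + \<epsilon>} \<Longrightarrow> Fmix F \<zeta> s < s / \<alpha>"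
    using lcp unfolding is_LCP_def ts_def by blast
  show ?thesis
  proof (cases "t \<le> ts + \<epsilon>")
    case True
    then show ?thesis using right t by (auto simp: ts_def)
  next
    case False
    define f where "f s = Fmix F \<zeta> s - s / \<alpha>" for s
    have "0 < \<alpha> * (1 - \<zeta>)" using alpha zeta by simp
    then have sub: "{ts + \<epsilon>..t} \<subseteq> {0<..<1}" using crossing(1) \<open>\<epsilon> > 0\<close> t alpha by auto
    have "continuous_on {ts + \<epsilon>..t} f"
      unfolding f_def[abs_def] using alpha
      by (intro continuous_intros continuous_on_Fmix continuous_on_subset[OF cont sub]) auto
    moreover have "f (ts + \<epsilon>) < 0" using right[of "ts + \<epsilon>"] \<open>\<epsilon> > 0\<close> by (simp add: f_def)
    moreover have "y < ts + \<epsilon>" if "ts + \<epsilon> \<le> y" "y \<le> t" "f y = 0" for y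
      using crossing(1) crossing(4)[of y] that t \<open>\<epsilon> > 0\<close> by (auto simp: f_def ts_def)
    ultimately have "\<not> 0 \<le> f t"
      using IVT'[of f "ts + \<epsilon>" 0 t] False by force
    then show ?thesis by (simp add: f_def)
  qed
qed

section \<open>Asymptotics of the step-up procedure\<close>

lemma monotone_tendsto_compose:
  fixes T :: "nat \<Rightarrow> real \<Rightarrow> real" and f :: "real \<Rightarrow> real"
  assumes mono: "\<And>n s s'. s \<le> s' \<Longrightarrow> T n s \<le> T n s'"
    and conv: "\<And>r. r \<in> \<rat> \<Longrightarrow> r \<in> {a<..<b} \<Longrightarrow> (\<lambda>n. T n r) \<longlonglongrightarrow> f r"
    and cont: "isCont f t" and t: "t \<in> {a<..<b}" and lim: "\<tau> \<longlonglongrightarrow> t"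
  shows "(\<lambda>n. T n (\<tau> n)) \<longlonglongrightarrow> f t"
proof (rule order_tendstoI)
  fix y assume "y < f t"
  with cont have "\<forall>\<^sub>F s in at t. y < f s" by (simp add: isCont_def order_tendstoD)
  then obtain d where "d > 0" and d: "\<And>s. s \<noteq> t \<Longrightarrow> dist s t < d \<Longrightarrow> y < f s"
    by (auto simp: eventually_at)
  obtain r where r: "r \<in> \<rat>" "max (t - d) a < r" "r < t"
    using Rats_dense_in_real[of "max (t - d) a" t] t \<open>d > 0\<close> by auto
  have "y < f r" using d[of r] r by (auto simp: dist_real_def)
  then have "\<forall>\<^sub>F n in sequentially. y < T n r" using r t conv[of r] by (auto intro: order_tendstoD)
  moreover have "\<forall>\<^sub>F n in sequentially. r < \<tau> n" using r by (intro order_tendstoD[OF lim])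
  ultimately show "\<forall>\<^sub>F n in sequentially. y < T n (\<tau> n)"
    by eventually_elim (use mono in \<open>smt (verit)\<close>)
next
  fix y assume "f t < y"
  with cont have "\<forall>\<^sub>F s in at t. f s < y" by (simp add: isCont_def order_tendstoD)
  then obtain d where "d > 0" and d: "\<And>s. s \<noteq> t \<Longrightarrow> dist s t < d \<Longrightarrow> f s < y"
    by (auto simp: eventually_at)
  obtain r where r: "r \<in> \<rat>" "t < r" "r < min (t + d) b"
    using Rats_dense_in_real[of t "min (t + d) b"] t \<open>d > 0\<close> by auto
  have "f r < y" using d[of r] r by (auto simp: dist_real_def)
  then have "\<forall>\<^sub>F n in sequentially. T n r < y" using r t conv[of r] by (auto intro: order_tendstoD)
  moreover have "\<forall>\<^sub>F n in sequentially. \<tau> n < r" using r by (intro order_tendstoD[OF lim])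
  ultimately show "\<forall>\<^sub>F n in sequentially. T n (\<tau> n) < y"
    by eventually_elim (use mono in \<open>smt (verit)\<close>)
qed

lemma lsu_threshold_eventually_ge:
  fixes p :: "nat \<Rightarrow> nat \<Rightarrow> real"
  assumes r: "0 < r" "r < \<alpha>"
    and lim: "(\<lambda>n. real (card {i. i < n \<and> p n i \<le> r}) / real n) \<longlonglongrightarrow> L"
    and above: "r / \<alpha> < L"
  shows "\<forall>\<^sub>F n in sequentially. r \<le> lsu_threshold \<alpha> n (p n)"
proof -
  define \<delta> where "\<delta> = L - r / \<alpha>"
  have "\<delta> > 0" using above by (simp add: \<delta>_def)
  have "\<forall>\<^sub>F n in sequentially. r / \<alpha> + \<delta> / 2 < real (card {i. i < n \<and> p n i \<le> r}) / real n"
    using above by (intro order_tendstoD(1)[OF lim]) (simp add: \<delta>_def field_simps)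
  moreover have "\<forall>\<^sub>F n in sequentially. 2 / \<delta> < real n"
    by (rule filterlim_at_top_dense[THEN iffD1, rule_format, OF filterlim_real_sequentially])
  ultimately show ?thesis
  proof eventually_elim
    case (elim n)
    then have n: "real n > 0" using \<open>\<delta> > 0\<close> by (smt (verit) divide_pos_pos)
    \<comment> \<open>the smallest k with r \<le> k \<alpha> / n is a candidate index of the step-up procedure\<close>
    define k where "k = nat \<lceil>real n * r / \<alpha>\<rceil>"
    have "0 < real n * r / \<alpha>" using n r by simp
    then have k: "real n * r / \<alpha> \<le> real k" "real k < real n * r / \<alpha> + 1"
      unfolding k_def by linarith+
    have "real n * r / \<alpha> < real n" using n r by (simp add: divide_less_eq)
    then have "k \<le> n" unfolding k_def by (simp add: nat_le_iff ceiling_le_iff)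
    have "1 \<le> k" using k \<open>0 < real n * r / \<alpha>\<close> by linarith
    have rk: "r \<le> real k * \<alpha> / real n" using k n r by (simp add: field_simps)
    have "1 < real n * \<delta> / 2" using elim(2) \<open>\<delta> > 0\<close> by (simp add: field_simps)
    moreover have "real n * (r / \<alpha> + \<delta> / 2) = real n * r / \<alpha> + real n * \<delta> / 2"
      by (simp add: algebra_simps)
    ultimately have "real k < real n * (r / \<alpha> + \<delta> / 2)" using k by linarith
    also have "\<dots> < real (card {i. i < n \<and> p n i \<le> r})" using elim(1) n by (simp add: field_simps)
    also have "\<dots> \<le> real (card {i. i < n \<and> p n i \<le> real k * \<alpha> / real n})"
      using rk by (intro of_nat_mono card_mono) auto
    finally have "k \<le> lsu_num \<alpha> n (p n)" using \<open>1 \<le> k\<close> \<open>k \<le> n\<close> by (intro le_lsu_num) auto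
    then have "real k * \<alpha> / real n \<le> lsu_threshold \<alpha> n (p n)"
      using r n by (simp add: lsu_threshold_def divide_right_mono)
    then show ?case using rk by linarith
  qed
qed

lemma lsu_threshold_less_if_below_on_grid:
  fixes p :: "nat \<Rightarrow> real" and G :: "real set"
  assumes r: "0 < r" "r \<le> \<alpha>"
    and grid: "\<And>t. t \<in> {r..\<alpha>} \<Longrightarrow> \<exists>s\<in>G. t \<le> s \<and> s \<le> t + h" and "h / \<alpha> \<le> \<eta>"
    and below: "\<And>s. s \<in> G \<Longrightarrow> real (card {i. i < n \<and> p i \<le> s}) < real n * (s / \<alpha> - \<eta>)"
  shows "lsu_threshold \<alpha> n p < r"
proof (rule ccontr)
  define \<tau> where "\<tau> = lsu_threshold \<alpha> n p"
  define m where "m = lsu_num \<alpha> n p"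
  assume "\<not> lsu_threshold \<alpha> n p < r"
  then have "r \<le> \<tau>" by (simp add: \<tau>_def)
  then have "0 < m" "0 < n" using r by (auto simp: \<tau>_def m_def lsu_threshold_def intro: gr0I)
  have "\<tau> \<le> \<alpha>" using r by (simp add: \<tau>_def lsu_threshold_le)
  then obtain s where s: "s \<in> G" "\<tau> \<le> s" "s \<le> \<tau> + h" using grid \<open>r \<le> \<tau>\<close> by auto
  have "real m \<le> real (card {i. i < n \<and> p i \<le> \<tau>})"
    using lsu_num_le_card[OF \<open>0 < m\<close>[unfolded m_def]] by (simp add: m_def \<tau>_def)
  also have "\<dots> \<le> real (card {i. i < n \<and> p i \<le> s})"
    using s(2) by (intro of_nat_mono card_mono) auto
  also have "\<dots> < real n * (s / \<alpha> - \<eta>)" using below[OF s(1)] .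
  also have "\<dots> \<le> real n * (\<tau> / \<alpha>)"
  proof (intro mult_left_mono)
    have "s / \<alpha> \<le> \<tau> / \<alpha> + h / \<alpha>" using s(3) r by (simp add: field_simps)
    then show "s / \<alpha> - \<eta> \<le> \<tau> / \<alpha>" using \<open>h / \<alpha> \<le> \<eta>\<close> by linarith
  qed simp
  also have "\<dots> = real m" using r \<open>0 < n\<close> by (simp add: \<tau>_def m_def lsu_threshold_def)
  finally show False by simp
qed

lemma lsu_threshold_eventually_less:
  fixes p :: "nat \<Rightarrow> nat \<Rightarrow> real" and H :: "real \<Rightarrow> real"
  assumes r: "0 < r" "r < \<alpha>"
    and lim: "\<And>t. t \<in> {r..\<alpha>} \<Longrightarrow> (\<lambda>n. real (card {i. i < n \<and> p n i \<le> t}) / real n) \<longlonglongrightarrow> H t"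
    and cont: "continuous_on {r..\<alpha>} H"
    and below: "\<And>t. t \<in> {r..\<alpha>} \<Longrightarrow> H t < t / \<alpha>"
  shows "\<forall>\<^sub>F n in sequentially. lsu_threshold \<alpha> n (p n) < r"
proof -
  have gap_cont: "continuous_on {r..\<alpha>} (\<lambda>t. t / \<alpha> - H t)"
    using r by (intro continuous_intros cont) auto
  have "\<exists>t0\<in>{r..\<alpha>}. \<forall>t\<in>{r..\<alpha>}. t0 / \<alpha> - H t0 \<le> t / \<alpha> - H t"
    using continuous_attains_inf[OF compact_Icc _ gap_cont] r by simp
  then obtain t0 where t0: "t0 \<in> {r..\<alpha>}" "\<And>t. t \<in> {r..\<alpha>} \<Longrightarrow> t0 / \<alpha> - H t0 \<le> t / \<alpha> - H t"
    by blast
  define \<eta> where "\<eta> = t0 / \<alpha> - H t0"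
  have "\<eta> > 0" using below[OF t0(1)] by (simp add: \<eta>_def)
  have gap: "H t + \<eta> \<le> t / \<alpha>" if "t \<in> {r..\<alpha>}" for t using t0(2)[OF that] by (simp add: \<eta>_def)
  \<comment> \<open>on a finite grid of mesh h \<le> \<alpha> \<eta> / 2 the pointwise convergence is uniform\<close>
  define J :: nat where "J = nat \<lceil>2 * (\<alpha> - r) / (\<alpha> * \<eta>)\<rceil> + 1"
  define h where "h = (\<alpha> - r) / real J"
  define G where "G = (\<lambda>j. r + real j * h) ` {..J}"
  have "real J > 0" by (simp add: J_def)
  have "h > 0" using r \<open>real J > 0\<close> by (simp add: h_def)
  have "2 * (\<alpha> - r) / (\<alpha> * \<eta>) \<le> real J" unfolding J_def by linarith
  then have "h / \<alpha> \<le> \<eta> / 2"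
    using r \<open>\<eta> > 0\<close> \<open>real J > 0\<close> by (simp add: h_def field_simps)
  have G_sub: "G \<subseteq> {r..\<alpha>}"
  proof
    fix s assume "s \<in> G"
    then obtain j where "j \<le> J" "s = r + real j * h" by (auto simp: G_def)
    moreover have "real j * h \<le> real J * h" using \<open>j \<le> J\<close> \<open>h > 0\<close> by (intro mult_right_mono) auto
    moreover have "real J * h = \<alpha> - r" using \<open>real J > 0\<close> by (simp add: h_def)
    ultimately show "s \<in> {r..\<alpha>}" using \<open>h > 0\<close> by simp
  qed
  have grid: "\<exists>s\<in>G. t \<le> s \<and> s \<le> t + h" if t: "t \<in> {r..\<alpha>}" for t
  proof -
    define j where "j = nat \<lceil>(t - r) / h\<rceil>"
    have "0 \<le> (t - r) / h" using t \<open>h > 0\<close> by simp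
    have "(t - r) / h \<le> (\<alpha> - r) / h" using t \<open>h > 0\<close> by (simp add: divide_right_mono)
    also have "\<dots> = real J" using r \<open>real J > 0\<close> by (simp add: h_def)
    finally have "j \<le> J" unfolding j_def by (simp add: nat_le_iff ceiling_le_iff)
    have "(t - r) / h * h \<le> real j * h" "real j * h \<le> ((t - r) / h + 1) * h"
      unfolding j_def using \<open>0 \<le> (t - r) / h\<close> \<open>h > 0\<close>
      by (intro mult_right_mono; linarith)+
    then have "t \<le> r + real j * h" "r + real j * h \<le> t + h"
      using \<open>h > 0\<close> by (simp_all add: distrib_right)
    then show ?thesis using \<open>j \<le> J\<close> by (auto simp: G_def)
  qed
  have "\<forall>\<^sub>F n in sequentially. \<forall>s\<in>G. real (card {i. i < n \<and> p n i \<le> s}) / real n < H s + \<eta> / 2"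
    using G_sub \<open>\<eta> > 0\<close>
    by (intro eventually_ball_finite ballI order_tendstoD(2)[OF lim]) (auto simp: G_def)
  moreover have "\<forall>\<^sub>F n in sequentially. 0 < n" by (rule eventually_gt_at_top)
  ultimately show ?thesis
  proof eventually_elim
    case (elim n)
    show ?case
    proof (rule lsu_threshold_less_if_below_on_grid[OF _ _ grid \<open>h / \<alpha> \<le> \<eta> / 2\<close>])
      fix s assume "s \<in> G"
      then have "real (card {i. i < n \<and> p n i \<le> s}) < real n * (H s + \<eta> / 2)"
        using elim by (simp add: pos_divide_less_eq mult.commute)
      also have "\<dots> \<le> real n * (s / \<alpha> - \<eta> / 2)"
        using gap[of s] G_sub \<open>s \<in> G\<close> by (intro mult_left_mono) auto
      finally show "real (card {i. i < n \<and> p n i \<le> s}) < real n * (s / \<alpha> - \<eta> / 2)" .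
    qed (use r in auto)
  qed
qed

lemma lsu_threshold_tendsto:
  fixes p :: "nat \<Rightarrow> nat \<Rightarrow> real" and H :: "real \<Rightarrow> real"
  assumes alpha: "0 < \<alpha>" "\<alpha> < 1" and ts: "0 < ts" "ts \<le> \<alpha>"
    and lim: "\<And>t. t \<in> {0<..<1} \<Longrightarrow> (\<lambda>n. real (card {i. i < n \<and> p n i \<le> t}) / real n) \<longlonglongrightarrow> H t"
    and cont: "continuous_on {0<..<1} H"
    and left: "\<exists>\<epsilon>>0. \<forall>t\<in>{ts - \<epsilon>..<ts}. t / \<alpha> < H t"
    and right: "\<And>t. ts < t \<Longrightarrow> t \<le> \<alpha> \<Longrightarrow> H t < t / \<alpha>"
  shows "(\<lambda>n. lsu_threshold \<alpha> n (p n)) \<longlonglongrightarrow> ts"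
proof (rule order_tendstoI)
  fix a assume "a < ts"
  obtain \<epsilon> where "\<epsilon> > 0" and \<epsilon>: "\<And>t. t \<in> {ts - \<epsilon>..<ts} \<Longrightarrow> t / \<alpha> < H t"
    using left by blast
  define r where "r = (max (max a (ts - \<epsilon>)) 0 + ts) / 2"
  have r: "a < r" "ts - \<epsilon> \<le> r" "0 < r" "r < ts"
    using \<open>a < ts\<close> \<open>\<epsilon> > 0\<close> ts by (auto simp: r_def)
  have "\<forall>\<^sub>F n in sequentially. r \<le> lsu_threshold \<alpha> n (p n)"
    using r ts alpha \<epsilon>[of r] by (intro lsu_threshold_eventually_ge[OF _ _ lim]) auto
  then show "\<forall>\<^sub>F n in sequentially. a < lsu_threshold \<alpha> n (p n)"
    by eventually_elim (use r in linarith)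
next
  fix a assume "ts < a"
  show "\<forall>\<^sub>F n in sequentially. lsu_threshold \<alpha> n (p n) < a"
  proof (cases "\<alpha> < a")
    case True
    then show ?thesis using lsu_threshold_le alpha by (intro always_eventually) (smt (verit))
  next
    case False
    define r where "r = min a ((ts + \<alpha>) / 2)"
    have "ts < \<alpha>" using \<open>ts < a\<close> False by linarith
    then have r: "ts < r" "r < \<alpha>" "r \<le> a" using \<open>ts < a\<close> by (auto simp: r_def min_def)
    have sub: "{r..\<alpha>} \<subseteq> {0<..<1}" using r ts alpha by auto
    have "\<forall>\<^sub>F n in sequentially. lsu_threshold \<alpha> n (p n) < r"
      using r ts sub
      by (intro lsu_threshold_eventually_less[where H=H] lim continuous_on_subset[OF cont] right) auto
    then show ?thesis by eventually_elim (use r in linarith)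
  qed
qed

lemma card_pvalues_le_split:
  fixes p :: "nat \<Rightarrow> real"
  assumes "I \<subseteq> {..<n}" "\<And>i. i < n \<Longrightarrow> i \<notin> I \<Longrightarrow> p i = 0" "0 \<le> s"
  shows "card {i. i < n \<and> p i \<le> s} = (n - card I) + card {i\<in>I. p i \<le> s}"
proof -
  have "finite I" using assms(1) finite_subset by blast
  have split: "{i. i < n \<and> p i \<le> s} = ({..<n} - I) \<union> {i\<in>I. p i \<le> s}" using assms by auto
  have "card {i. i < n \<and> p i \<le> s} = card ({..<n} - I) + card {i\<in>I. p i \<le> s}"
    unfolding split by (rule card_Un_disjoint) (use \<open>finite I\<close> in auto)
  then show ?thesis using assms(1) \<open>finite I\<close> by (simp add: card_Diff_subset)
qed

lemma tendsto_null_count: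
  fixes p :: "nat \<Rightarrow> nat \<Rightarrow> real" and I0 :: "nat \<Rightarrow> nat set" and F :: "real \<Rightarrow> real"
  assumes fin: "\<And>n. finite (I0 n)" and cont: "continuous_on {0<..<1} F"
    and ecdf: "\<And>t. t \<in> \<rat> \<Longrightarrow> t \<in> {0<..<1} \<Longrightarrow>
       (\<lambda>n. real (card {i\<in>I0 n. p n i \<le> t}) / real n) \<longlonglongrightarrow> \<zeta> * F t"
    and t: "t \<in> {0<..<1}" and lim: "\<sigma> \<longlonglongrightarrow> t"
  shows "(\<lambda>n. real (card {i\<in>I0 n. p n i \<le> \<sigma> n}) / real n) \<longlonglongrightarrow> \<zeta> * F t"
proof (rule monotone_tendsto_compose[where f="\<lambda>t. \<zeta> * F t" and a=0 and b=1, OF _ ecdf _ t lim])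
  show "real (card {i\<in>I0 n. p n i \<le> s}) / real n \<le> real (card {i\<in>I0 n. p n i \<le> s'}) / real n"
    if "s \<le> s'" for n s s'
    using that fin by (intro divide_right_mono of_nat_mono card_mono) auto
  have "isCont F t" using continuous_on_interior[OF cont] t by (simp add: interior_open)
  then show "isCont (\<lambda>t. \<zeta> * F t) t" by (intro continuous_intros)
qed auto

lemma tendsto_card_div_max_1:
  fixes V R :: "nat \<Rightarrow> nat"
  assumes V: "(\<lambda>n. real (V n) / real n) \<longlonglongrightarrow> a" and R: "(\<lambda>n. real (R n) / real n) \<longlonglongrightarrow> b"
    and "0 < b"
  shows "(\<lambda>n. real (V n) / real (max (R n) 1)) \<longlonglongrightarrow> a / b"
proof (rule Lim_transform_eventually)
  show "(\<lambda>n. (real (V n) / real n) / (real (R n) / real n)) \<longlonglongrightarrow> a / b"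
    using tendsto_divide[OF V R] \<open>0 < b\<close> by simp
  have "\<forall>\<^sub>F n in sequentially. 0 < real (R n) / real n" using R \<open>0 < b\<close> by (rule order_tendstoD)
  then show "\<forall>\<^sub>F n in sequentially. (real (V n) / real n) / (real (R n) / real n)
      = real (V n) / real (max (R n) 1)"
    by eventually_elim (auto simp: zero_less_divide_iff max_def)
qed

lemma lsu_asymptotics:
  fixes p :: "nat \<Rightarrow> nat \<Rightarrow> real" and I0 :: "nat \<Rightarrow> nat set" and F :: "real \<Rightarrow> real"
  assumes alpha: "0 < \<alpha>" "\<alpha> < 1" and zeta: "0 < \<zeta>" "\<zeta> < 1"
    and I0: "\<And>n. I0 n \<subseteq> {..<n}" and zeta_lim: "(\<lambda>n. real (card (I0 n)) / real n) \<longlonglongrightarrow> \<zeta>"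
    and cont: "continuous_on {0<..<1} F"
    and bounds: "\<And>t. t \<in> {0<..<1} \<Longrightarrow> 0 \<le> F t \<and> F t \<le> 1"
    and false_null: "\<And>n i. i < n \<Longrightarrow> i \<notin> I0 n \<Longrightarrow> p n i = 0"
    and ecdf: "\<And>t. t \<in> \<rat> \<Longrightarrow> t \<in> {0<..<1} \<Longrightarrow>
       (\<lambda>n. real (card {i\<in>I0 n. p n i \<le> t}) / real n) \<longlonglongrightarrow> \<zeta> * F t"
    and lcp: "is_LCP \<alpha> F \<zeta>"
  shows "(\<lambda>n. real (card (lsu_rejected \<alpha> n (p n) \<inter> I0 n)) / real n)
           \<longlonglongrightarrow> tcross \<alpha> F \<zeta> / \<alpha> - (1 - \<zeta>)"
    and "(\<lambda>n. real (card (lsu_rejected \<alpha> n (p n) \<inter> I0 n))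
              / real (max (card (lsu_rejected \<alpha> n (p n))) 1))
           \<longlonglongrightarrow> 1 - \<alpha> * (1 - \<zeta>) / tcross \<alpha> F \<zeta>"
proof -
  define ts where "ts = tcross \<alpha> F \<zeta>"
  define \<tau> where "\<tau> n = lsu_threshold \<alpha> n (p n)" for n
  note crossing = tcross_crossing[OF alpha zeta cont bounds, folded ts_def]
  have "0 < \<alpha> * (1 - \<zeta>)" using alpha zeta by simp
  then have ts: "0 < ts" "ts < 1" using crossing(1,2) alpha by linarith+
  have fin: "finite (I0 n)" for n using I0 finite_subset by blast
  note null_lim = tendsto_null_count[OF fin cont ecdf]
  \<comment> \<open>the false null hypotheses contribute their p-values 0 to every count\<close>
  have count: "real (card {i. i < n \<and> p n i \<le> s}) / real n
      = 1 - real (card (I0 n)) / real n + real (card {i\<in>I0 n. p n i \<le> s}) / real n"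
    if "0 < n" "0 \<le> s" for n s
    using card_pvalues_le_split[OF I0 false_null that(2)] card_mono[OF _ I0[of n]] that(1)
    by (simp add: of_nat_diff field_simps)
  have "\<tau> \<longlonglongrightarrow> ts"
    unfolding \<tau>_def
  proof (rule lsu_threshold_tendsto[OF alpha ts(1) crossing(2) _ continuous_on_Fmix[OF cont]])
    show "(\<lambda>n. real (card {i. i < n \<and> p n i \<le> t}) / real n) \<longlonglongrightarrow> Fmix F \<zeta> t"
      if t: "t \<in> {0<..<1}" for t
    proof (rule Lim_transform_eventually)
      show "(\<lambda>n. 1 - real (card (I0 n)) / real n + real (card {i\<in>I0 n. p n i \<le> t}) / real n)
          \<longlonglongrightarrow> Fmix F \<zeta> t"
        unfolding Fmix_def using t by (intro tendsto_intros zeta_lim null_lim) auto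
      show "\<forall>\<^sub>F n in sequentially. 1 - real (card (I0 n)) / real n
          + real (card {i\<in>I0 n. p n i \<le> t}) / real n = real (card {i. i < n \<and> p n i \<le> t}) / real n"
        using eventually_gt_at_top[of 0] by eventually_elim (use count t in auto)
    qed
    show "\<exists>\<epsilon>>0. \<forall>t\<in>{ts - \<epsilon>..<ts}. t / \<alpha> < Fmix F \<zeta> t"
      using lcp unfolding is_LCP_def ts_def by blast
    show "Fmix F \<zeta> t < t / \<alpha>" if "ts < t" "t \<le> \<alpha>" for t
      using Fmix_less_after_tcross[OF alpha zeta cont bounds lcp] that by (simp add: ts_def)
  qed
  moreover have "\<zeta> * F ts = ts / \<alpha> - (1 - \<zeta>)" using crossing(3) by (simp add: Fmix_def)
  ultimately have V_lim: "(\<lambda>n. real (card {i\<in>I0 n. p n i \<le> \<tau> n}) / real n) \<longlonglongrightarrow> ts / \<alpha> - (1 - \<zeta>)"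
    using null_lim[of ts \<tau>] ts by simp
  \<comment> \<open>once the threshold is positive, the rejections are exactly the p-values below it\<close>
  have pos: "\<forall>\<^sub>F n in sequentially. 0 < \<tau> n \<and> 0 < n"
    using order_tendstoD(1)[OF \<open>\<tau> \<longlonglongrightarrow> ts\<close> ts(1)] eventually_gt_at_top[of 0] by eventually_elim simp
  then have "\<forall>\<^sub>F n in sequentially. real (card {i\<in>I0 n. p n i \<le> \<tau> n}) / real n
      = real (card (lsu_rejected \<alpha> n (p n) \<inter> I0 n)) / real n"
    by eventually_elim (use I0 in \<open>auto simp: \<tau>_def lsu_rejected_eq intro!: arg_cong[where f=card]\<close>)
  from Lim_transform_eventually[OF V_lim this]
  show V: "(\<lambda>n. real (card (lsu_rejected \<alpha> n (p n) \<inter> I0 n)) / real n) \<longlonglongrightarrow> ts / \<alpha> - (1 - \<zeta>)" .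
  have "\<forall>\<^sub>F n in sequentially. 1 - real (card (I0 n)) / real n
      + real (card {i\<in>I0 n. p n i \<le> \<tau> n}) / real n = real (card (lsu_rejected \<alpha> n (p n))) / real n"
    using pos by eventually_elim (simp add: count \<tau>_def lsu_rejected_eq)
  with tendsto_add[OF tendsto_diff[OF tendsto_const[of 1] zeta_lim] V_lim]
  have R: "(\<lambda>n. real (card (lsu_rejected \<alpha> n (p n))) / real n) \<longlonglongrightarrow> ts / \<alpha>"
    by (auto intro: Lim_transform_eventually)
  have "(ts / \<alpha> - (1 - \<zeta>)) / (ts / \<alpha>) = 1 - \<alpha> * (1 - \<zeta>) / ts"
    using ts alpha by (simp add: field_simps)
  then show "(\<lambda>n. real (card (lsu_rejected \<alpha> n (p n) \<inter> I0 n))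
              / real (max (card (lsu_rejected \<alpha> n (p n))) 1)) \<longlonglongrightarrow> 1 - \<alpha> * (1 - \<zeta>) / ts"
    using tendsto_card_div_max_1[OF V R] ts alpha by simp
qed

section \<open>A strong law for triangular arrays\<close>

lemma (in prob_space) prob_sum_deviation_le:
  fixes Y :: "nat \<Rightarrow> 'a \<Rightarrow> real"
  assumes "finite I" "card I \<le> n" and indep: "indep_vars (\<lambda>_. borel) Y I"
    and bounded: "\<And>i \<omega>. i \<in> I \<Longrightarrow> \<omega> \<in> space M \<Longrightarrow> Y i \<omega> \<in> {0..1}"
    and mean: "\<And>i. i \<in> I \<Longrightarrow> expectation (Y i) = c" and "e > 0"
  shows "prob {\<omega>\<in>space M. real n * e \<le> \<bar>(\<Sum>i\<in>I. Y i \<omega>) - real (card I) * c\<bar>}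
           \<le> 2 * exp (- (2 * e\<^sup>2) * real n)"
proof (cases "I = {}")
  case True
  show ?thesis
  proof (cases "n = 0")
    case False
    then have "{\<omega>\<in>space M. real n * e \<le> \<bar>(\<Sum>i\<in>I. Y i \<omega>) - real (card I) * c\<bar>} = {}"
      using True \<open>e > 0\<close> by (auto simp: mult_le_0_iff)
    then show ?thesis by (simp only: measure_empty) simp
  qed (auto intro: order.trans[OF prob_le_1])
next
  case False
  then have card: "0 < real (card I)" using \<open>finite I\<close> by (simp add: card_gt_0_iff)
  interpret Hoeffding_ineq M I Y "\<lambda>_. 0" "\<lambda>_. 1" "real (card I) * c"
    by unfold_locales (use assms in \<open>auto intro!: AE_I2\<close>)
  have "prob {\<omega>\<in>space M. real n * e \<le> \<bar>(\<Sum>i\<in>I. Y i \<omega>) - real (card I) * c\<bar>}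
      \<le> 2 * exp (- 2 * (real n * e)\<^sup>2 / (\<Sum>i\<in>I. (1 - 0)\<^sup>2))"
    using \<open>e > 0\<close> card by (intro Hoeffding_ineq_abs_ge) auto
  also have "(\<Sum>i\<in>I. ((1::real) - 0)\<^sup>2) = real (card I)" by simp
  also have "exp (- 2 * (real n * e)\<^sup>2 / real (card I)) \<le> exp (- (2 * e\<^sup>2) * real n)"
  proof -
    have "(2 * e\<^sup>2) * real n * real (card I) \<le> (2 * e\<^sup>2) * real n * real n"
      using \<open>card I \<le> n\<close> by (intro mult_left_mono) auto
    then show ?thesis using card by (simp add: field_simps power2_eq_square)
  qed
  finally show ?thesis by simp
qed

lemma (in prob_space) AE_tendsto_triangular_mean:
  fixes Y :: "nat \<Rightarrow> nat \<Rightarrow> 'a \<Rightarrow> real" and I :: "nat \<Rightarrow> nat set"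
  assumes fin: "\<And>n. finite (I n)" and card: "\<And>n. card (I n) \<le> n"
    and indep: "\<And>n. indep_vars (\<lambda>_. borel) (Y n) (I n)"
    and bounded: "\<And>n i \<omega>. i \<in> I n \<Longrightarrow> \<omega> \<in> space M \<Longrightarrow> Y n i \<omega> \<in> {0..1}"
    and mean: "\<And>n i. i \<in> I n \<Longrightarrow> expectation (Y n i) = c"
  shows "AE \<omega> in M. (\<lambda>n. (\<Sum>i\<in>I n. Y n i \<omega>) / real n - real (card (I n)) / real n * c)
                     \<longlonglongrightarrow> 0"
proof -
  define D where "D n \<omega> = (\<Sum>i\<in>I n. Y n i \<omega>) - real (card (I n)) * c" for n \<omega>
  have [measurable]: "Y n i \<in> borel_measurable M" if "i \<in> I n" for n i
    using indep[of n] that unfolding indep_vars_def by auto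
  \<comment> \<open>Hoeffding's bounds are summable, so Borel-Cantelli applies for every fixed e\<close>
  have eventually_small: "AE \<omega> in M. \<forall>\<^sub>F n in sequentially. \<bar>D n \<omega>\<bar> / real n < e" if "e > 0" for e
  proof -
    define A where "A n = {\<omega>\<in>space M. real n * e \<le> \<bar>D n \<omega>\<bar>}" for n
    have A_sets: "A n \<in> sets M" for n unfolding A_def D_def by measurable
    have geometric: "exp (- (2 * e\<^sup>2) * real n) = exp (- (2 * e\<^sup>2)) ^ n" for n
      using exp_of_nat_mult[of n "- (2 * e\<^sup>2)"] by (simp add: mult.commute)
    have "summable (\<lambda>n. 2 * exp (- (2 * e\<^sup>2)) ^ n)"
      using \<open>e > 0\<close> by (intro summable_mult summable_geometric) simp
    then have summable_bound: "summable (\<lambda>n. 2 * exp (- (2 * e\<^sup>2) * real n))"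
      unfolding geometric .
    have prob_bound: "prob (A n) \<le> 2 * exp (- (2 * e\<^sup>2) * real n)" for n
      unfolding A_def D_def
      by (rule prob_sum_deviation_le[OF fin card indep bounded[of _ n] mean[of _ n] \<open>e > 0\<close>])
    have "summable (\<lambda>n. prob (A n))"
      by (rule summable_comparison_test'[OF summable_bound]) (use prob_bound in simp)
    then have "AE \<omega> in M. \<forall>\<^sub>F n in sequentially. \<omega> \<in> space M - A n"
      by (intro borel_cantelli_AE1) (auto simp: A_sets less_top[symmetric])
    then show ?thesis
    proof (rule AE_mp, intro AE_I2 impI)
      fix \<omega> assume "\<omega> \<in> space M" "\<forall>\<^sub>F n in sequentially. \<omega> \<in> space M - A n"
      then show "\<forall>\<^sub>F n in sequentially. \<bar>D n \<omega>\<bar> / real n < e"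
        by (elim eventually_mono) (use \<open>e > 0\<close> in \<open>auto simp: A_def not_le divide_less_eq mult.commute\<close>)
    qed
  qed
  have "AE \<omega> in M. \<forall>k::nat. \<forall>\<^sub>F n in sequentially. \<bar>D n \<omega>\<bar> / real n < 1 / real (Suc k)"
    by (subst AE_all_countable) (auto intro: eventually_small)
  then show ?thesis
  proof (rule AE_mp, intro AE_I2 impI)
    fix \<omega> assume small: "\<forall>k::nat. \<forall>\<^sub>F n in sequentially. \<bar>D n \<omega>\<bar> / real n < 1 / real (Suc k)"
    have "(\<lambda>n. D n \<omega> / real n) \<longlonglongrightarrow> 0"
    proof (rule tendstoI)
      fix e :: real assume "e > 0"
      then obtain k :: nat where k: "1 / real (Suc k) < e" by (metis nat_approx_posE)
      from small have "\<forall>\<^sub>F n in sequentially. \<bar>D n \<omega>\<bar> / real n < 1 / real (Suc k)" ..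
      then show "\<forall>\<^sub>F n in sequentially. dist (D n \<omega> / real n) 0 < e"
        by eventually_elim (use k in \<open>simp add: abs_divide\<close>)
    qed
    then show "(\<lambda>n. (\<Sum>i\<in>I n. Y n i \<omega>) / real n - real (card (I n)) / real n * c) \<longlonglongrightarrow> 0"
      by (simp add: D_def diff_divide_distrib)
  qed
qed

section \<open>Distribution functions and independence\<close>

lemma sets_Collect_borel_pred:
  assumes "f \<in> borel_measurable M" "{x. P x} \<in> sets borel"
  shows "{\<omega>\<in>space M. P (f \<omega>)} \<in> sets M"
proof -
  have "f -` {x. P x} \<inter> space M \<in> sets M" using assms by (rule measurable_sets)
  also have "f -` {x. P x} \<inter> space M = {\<omega>\<in>space M. P (f \<omega>)}" by auto
  finally show ?thesis .
qed

lemma (in prob_space) cdf_distr: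
  fixes Y :: "'a \<Rightarrow> real"
  shows "Y \<in> borel_measurable M \<Longrightarrow> cdf (distr M borel Y) x = prob {\<omega>\<in>space M. Y \<omega> \<le> x}"
  unfolding cdf_def by (simp add: measure_distr vimage_def Int_def conj_commute)

lemma (in prob_space) prob_eq_of_continuous_cdf:
  fixes Y :: "'a \<Rightarrow> real"
  assumes Y: "Y \<in> borel_measurable M" and W: "\<And>x. W x = prob {\<omega>\<in>space M. Y \<omega> \<le> x}"
    and "isCont W y"
  shows "prob {\<omega>\<in>space M. Y \<omega> = y} = 0"
proof -
  interpret D: real_distribution "distr M borel Y" using Y by simp
  have "W = cdf (distr M borel Y)" using W cdf_distr[OF Y] by auto
  then have "measure (distr M borel Y) {y} = 0" using \<open>isCont W y\<close> D.isCont_cdf by simp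
  then show ?thesis using Y by (simp add: measure_distr vimage_def Int_def conj_commute)
qed

lemma (in prob_space) prob_ge_of_continuous_cdf:
  fixes Y :: "'a \<Rightarrow> real"
  assumes Y: "Y \<in> borel_measurable M" and W: "\<And>x. W x = prob {\<omega>\<in>space M. Y \<omega> \<le> x}"
    and "isCont W y"
  shows "prob {\<omega>\<in>space M. y \<le> Y \<omega>} = 1 - W y"
proof -
  have less: "{\<omega>\<in>space M. Y \<omega> < y} \<in> events" and eq: "{\<omega>\<in>space M. Y \<omega> = y} \<in> events"
    by (intro sets_Collect_borel_pred[OF Y]; measurable)+
  have "W y = prob ({\<omega>\<in>space M. Y \<omega> < y} \<union> {\<omega>\<in>space M. Y \<omega> = y})"
    unfolding W by (rule arg_cong[where f=prob]) auto
  also have "\<dots> = prob {\<omega>\<in>space M. Y \<omega> < y}"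
    using finite_measure_Union[OF less eq] prob_eq_of_continuous_cdf[OF assms] by auto
  moreover have "{\<omega>\<in>space M. y \<le> Y \<omega>} = space M - {\<omega>\<in>space M. Y \<omega> < y}" by auto
  ultimately show ?thesis using prob_compl[OF less] by simp
qed

lemma continuous_cdf_inv:
  fixes W :: "real \<Rightarrow> real"
  assumes cont: "\<And>x. isCont W x" and mono: "\<And>x y. x \<le> y \<Longrightarrow> W x \<le> W y"
    and top: "(W \<longlongrightarrow> 1) at_top" and bot: "(W \<longlongrightarrow> 0) at_bot" and u: "0 < u" "u < 1"
  shows "u \<le> W y \<longleftrightarrow> cdf_inv W u \<le> y" and "W (cdf_inv W u) = u"
proof -
  define S where "S = {y. u \<le> W y}"
  have inv: "cdf_inv W u = Inf S" by (simp add: cdf_inv_def S_def)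
  have "\<forall>\<^sub>F y in at_top. u < W y" by (rule order_tendstoD(1)[OF top u(2)])
  then have "S \<noteq> {}" unfolding S_def by (auto simp: eventually_at_top_linorder intro: less_imp_le)
  have "\<forall>\<^sub>F y in at_bot. W y < u" by (rule order_tendstoD(2)[OF bot u(1)])
  then obtain L where L: "\<And>y. y \<le> L \<Longrightarrow> W y < u" by (auto simp: eventually_at_bot_linorder)
  have L_less: "L < y" if "y \<in> S" for y using L[of y] that by (force simp: S_def)
  then have bdd: "bdd_below S" by (meson bdd_below.I less_imp_le)
  have "continuous_on UNIV W" using cont by (simp add: continuous_at_imp_continuous_on)
  then have "closed S" unfolding S_def by (intro closed_Collect_le continuous_intros)
  then have inv_S: "cdf_inv W u \<in> S" unfolding inv using \<open>S \<noteq> {}\<close> bdd by (intro closed_contains_Inf)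
  show le_iff: "u \<le> W y \<longleftrightarrow> cdf_inv W u \<le> y" for y
  proof
    assume "u \<le> W y"
    then show "cdf_inv W u \<le> y" unfolding inv by (intro cInf_lower[OF _ bdd]) (simp add: S_def)
  next
    assume "cdf_inv W u \<le> y"
    then show "u \<le> W y" using mono inv_S by (force simp: S_def)
  qed
  \<comment> \<open>a level u crossed strictly at the infimum would be attained further left, by the IVT\<close>
  show "W (cdf_inv W u) = u"
  proof (rule ccontr)
    assume "W (cdf_inv W u) \<noteq> u"
    moreover have "u \<le> W (cdf_inv W u)" "L < cdf_inv W u" using inv_S L_less by (auto simp: S_def)
    moreover have "W L < u" using L by simp
    ultimately obtain y where "y \<le> cdf_inv W u" "W y = u" "y \<noteq> cdf_inv W u"
      using IVT'[of W L u "cdf_inv W u"] cont by (fastforce intro: continuous_at_imp_continuous_on)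
    then show False using le_iff[of y] by simp
  qed
qed

lemma tendsto_indicator_level_set:
  fixes W :: "real \<Rightarrow> real"
  assumes mono: "\<And>x y. x \<le> y \<Longrightarrow> W x \<le> W y" and cont: "isCont W y" and lim: "\<sigma> \<longlonglongrightarrow> y"
    and not_least: "W y = v \<Longrightarrow> \<exists>y'<y. W y' = v"
    and not_greatest: "W y = v \<Longrightarrow> \<exists>y'>y. W y' = v"
  shows "(\<lambda>i. indicator {x. W x = v} (\<sigma> i) :: real) \<longlonglongrightarrow> indicator {x. W x = v} y"
proof (cases "W y = v")
  case False
  have "(\<lambda>i. W (\<sigma> i)) \<longlonglongrightarrow> W y" by (rule isCont_tendsto_compose[OF cont lim])
  then have "\<forall>\<^sub>F i in sequentially. W (\<sigma> i) \<noteq> v" using False by (rule tendsto_imp_eventually_ne)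
  then have "\<forall>\<^sub>F i in sequentially. (indicator {x. W x = v} (\<sigma> i) :: real) = 0"
    by eventually_elim simp
  then show ?thesis using False by (simp add: tendsto_eventually)
next
  case True
  \<comment> \<open>the level set of a monotone function is an interval, and y lies in its interior\<close>
  obtain y1 y2 where "y1 < y" "W y1 = v" "y < y2" "W y2 = v" using not_least not_greatest True by blast
  then have "\<forall>\<^sub>F i in sequentially. y1 < \<sigma> i \<and> \<sigma> i < y2"
    using order_tendstoD[OF lim] by (auto intro: eventually_conj)
  then have "\<forall>\<^sub>F i in sequentially. (indicator {x. W x = v} (\<sigma> i) :: real) = 1"
  proof eventually_elim
    case (elim i)
    then have "W y1 \<le> W (\<sigma> i)" "W (\<sigma> i) \<le> W y2" using mono by auto
    then show ?case using \<open>W y1 = v\<close> \<open>W y2 = v\<close> by simp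
  qed
  then show ?thesis using True by (simp add: tendsto_eventually)
qed

lemma (in prob_space) indep_vars_reindex:
  assumes inj: "inj_on f I" and indep: "indep_vars M' X (f ` I)"
  shows "indep_vars (\<lambda>i. M' (f i)) (\<lambda>i. X (f i)) I"
proof -
  define F where "F i = sigma_sets (space M) {X i -` A \<inter> space M |A. A \<in> sets (M' i)}" for i
  from indep have rv: "\<forall>i\<in>f ` I. random_variable (M' i) (X i)"
    and F_indep: "indep_sets F (f ` I)"
    unfolding indep_vars_def F_def by auto
  have "indep_sets (\<lambda>i. F (f i)) I"
    unfolding indep_sets_def
  proof (intro conjI ballI allI impI)
    fix i assume "i \<in> I" then show "F (f i) \<subseteq> events"
      using F_indep unfolding indep_sets_def by auto
  next
    fix J A assume J: "J \<subseteq> I" "J \<noteq> {}" "finite J" and A: "A \<in> Pi J (\<lambda>i. F (f i))"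
    define B where "B y = A (the_inv_into J f y)" for y
    have inj_J: "inj_on f J" using inj J(1) by (rule inj_on_subset)
    have B_f: "B (f j) = A j" if "j \<in> J" for j using the_inv_into_f_f[OF inj_J that] B_def by simp
    have B: "B \<in> Pi (f ` J) F" using A B_f by auto
    have f_J: "f ` J \<subseteq> f ` I" "f ` J \<noteq> {}" "finite (f ` J)" using J by auto
    have "prob (\<Inter>j\<in>f ` J. B j) = (\<Prod>j\<in>f ` J. prob (B j))"
      using F_indep f_J B unfolding indep_sets_def by blast
    moreover have "(\<Inter>j\<in>f ` J. B j) = (\<Inter>j\<in>J. A j)" using B_f by auto
    moreover have "(\<Prod>j\<in>f ` J. prob (B j)) = (\<Prod>j\<in>J. prob (A j))"
    proof -
      have "(\<Prod>j\<in>f ` J. prob (B j)) = (\<Prod>j\<in>J. prob (B (f j)))"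
        using prod.reindex[OF inj_J, of "\<lambda>j. prob (B j)"] by (simp add: comp_def)
      also have "\<dots> = (\<Prod>j\<in>J. prob (A j))" by (rule prod.cong) (auto simp: B_f)
      finally show ?thesis .
    qed
    ultimately show "prob (\<Inter>j\<in>J. A j) = (\<Prod>j\<in>J. prob (A j))" by simp
  qed
  then show ?thesis unfolding indep_vars_def F_def using rv by auto
qed

lemma (in prob_space) indep_vars_Some:
  assumes "indep_vars (\<lambda>_. borel) (\<lambda>j. case j of None \<Rightarrow> Z | Some i \<Rightarrow> X i) (insert None (Some ` I))"
    and "J \<subseteq> I"
  shows "indep_vars (\<lambda>_. borel) X J"
proof -
  have "indep_vars (\<lambda>_. borel) (\<lambda>j. case j of None \<Rightarrow> Z | Some i \<Rightarrow> X i) (Some ` J)"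
    by (rule indep_vars_subset[OF assms(1)]) (use assms(2) in auto)
  from indep_vars_reindex[OF inj_on_subset[OF inj_Some subset_UNIV] this] show ?thesis by simp
qed

lemma (in prob_space) indep_var_None_Some:
  assumes "indep_vars (\<lambda>_. borel) (\<lambda>j. case j of None \<Rightarrow> Z | Some i \<Rightarrow> X i) (insert None (Some ` I))"
    and "i \<in> I"
  shows "indep_var borel Z borel (X i)"
proof -
  define f where "f b = (if b then None else Some i)" for b
  have "inj f" by (auto simp: inj_on_def f_def)
  have "indep_vars (\<lambda>_. borel) (\<lambda>j. case j of None \<Rightarrow> Z | Some i \<Rightarrow> X i) (f ` UNIV)"
    by (rule indep_vars_subset[OF assms(1)]) (use assms(2) in \<open>auto simp: f_def\<close>)
  from indep_vars_reindex[OF \<open>inj f\<close> this]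
  have "indep_vars (\<lambda>_. borel) (\<lambda>b. case f b of None \<Rightarrow> Z | Some i \<Rightarrow> X i) UNIV" .
  moreover have "(\<lambda>b. case f b of None \<Rightarrow> Z | Some i \<Rightarrow> X i) = case_bool Z (X i)"
    and "(\<lambda>_. borel) = case_bool borel borel"
    by (auto simp: f_def fun_eq_iff split: bool.split)
  ultimately show ?thesis unfolding indep_var_def by metis
qed

section \<open>The conditional distribution of a true-null p-value\<close>

text \<open>A single true null hypothesis in isolation: its statistic X0, independent of Z, and the
  test statistic T0 = g(X0, Z).  All true-null coordinates share this law, so the results below
  apply to each of them.\<close>

locale null_pvalue_model = prob_space M for M :: "'a measure" +
  fixes Xs Zs Ts :: "real set" and g g1 :: "real \<Rightarrow> real \<Rightarrow> real" and WX WT :: "real \<Rightarrow> real"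
    and X0 Z :: "'a \<Rightarrow> real"
  assumes intervals: "is_interval Xs" "is_interval Zs" "is_interval Ts"
    and g_cont: "continuous_on (Xs \<times> Zs) (\<lambda>(x, w). g x w)"
    and g_range: "\<forall>x\<in>Xs. \<forall>w\<in>Zs. g x w \<in> Ts"
    and g_mono1: "\<forall>w\<in>Zs. strict_mono_on Xs (\<lambda>x. g x w)"
    and g1_inv: "\<forall>x\<in>Xs. \<forall>w\<in>Zs. \<forall>t\<in>Ts. (g x w = t \<longleftrightarrow> x = g1 t w)"
    and Z_meas: "Z \<in> borel_measurable M" and Z_range: "\<forall>\<omega>\<in>space M. Z \<omega> \<in> Zs"
    and X0_meas: "X0 \<in> borel_measurable M" and X0_range: "\<forall>\<omega>\<in>space M. X0 \<omega> \<in> Xs"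
    and Z_X0_indep: "indep_var borel Z borel X0"
    and X0_cdf: "\<forall>x. WX x = measure M {\<omega>\<in>space M. X0 \<omega> \<le> x}"
    and WX_cont: "continuous_on UNIV WX"
    and T0_cdf: "\<forall>t. WT t = measure M {\<omega> \<in> space M. g (X0 \<omega>) (Z \<omega>) \<le> t}"
    and Finf_extensible: "\<forall>w\<in>Zs. \<exists>F. continuous_on {0..1} F \<and> F 0 = 0
                    \<and> (\<forall>t\<in>{0<..<1}. F t = Finf WX WT g1 w t)"
begin

definition "T0 \<omega> = g (X0 \<omega>) (Z \<omega>)"

text \<open>g extended by zero outside Xs \<times> Zs, with swapped arguments: a Borel function on the
  plane agreeing with g on the range of (Z, X0).\<close>
definition "g_ext p = indicator (Zs \<times> Xs) p *\<^sub>R g (snd p) (fst p)"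

lemma is_interval_Xs: "a \<in> Xs \<Longrightarrow> b \<in> Xs \<Longrightarrow> a \<le> x \<Longrightarrow> x \<le> b \<Longrightarrow> x \<in> Xs"
  using intervals(1) unfolding is_interval_1 by blast

lemma is_interval_Zs: "a \<in> Zs \<Longrightarrow> b \<in> Zs \<Longrightarrow> a \<le> x \<Longrightarrow> x \<le> b \<Longrightarrow> x \<in> Zs"
  using intervals(2) unfolding is_interval_1 by blast

lemma Xs_borel: "Xs \<in> sets borel" and Zs_borel: "Zs \<in> sets borel"
  using intervals by (auto intro: real_interval_borel_measurable)

lemma continuous_on_g_left: "w \<in> Zs \<Longrightarrow> continuous_on Xs (\<lambda>x. g x w)"
  using continuous_on_compose2[OF g_cont continuous_on_Pair[OF continuous_on_id continuous_on_const]]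
  by auto

lemma continuous_on_g_right: "x \<in> Xs \<Longrightarrow> continuous_on Zs (\<lambda>w. g x w)"
  using continuous_on_compose2[OF g_cont continuous_on_Pair[OF continuous_on_const continuous_on_id]]
  by auto

lemma g_ext_measurable: "g_ext \<in> borel_measurable borel"
proof -
  have "continuous_on (Zs \<times> Xs) (\<lambda>p. (snd p, fst p))" by (intro continuous_intros)
  then have "continuous_on (Zs \<times> Xs) (\<lambda>p. g (snd p) (fst p))"
    using continuous_on_compose2[OF g_cont] by (fastforce simp: case_prod_beta)
  moreover have "Zs \<times> Xs \<in> sets borel" using Xs_borel Zs_borel by (rule borel_Times[rotated])
  ultimately show ?thesis unfolding g_ext_def[abs_def]
    by (intro borel_measurable_continuous_on_indicator)
qed

lemma g_ext_eq: "w \<in> Zs \<Longrightarrow> x \<in> Xs \<Longrightarrow> g_ext (w, x) = g x w"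
  by (simp add: g_ext_def)

lemma T0_measurable: "T0 \<in> borel_measurable M"
proof (rule measurable_cong[THEN iffD1])
  show "(\<lambda>\<omega>. g_ext (Z \<omega>, X0 \<omega>)) \<in> borel_measurable M"
    using g_ext_measurable Z_meas X0_meas by (simp add: borel_prod[symmetric])
qed (use Z_range X0_range in \<open>simp add: g_ext_eq T0_def\<close>)

lemma g_X0_measurable: "w \<in> Zs \<Longrightarrow> (\<lambda>\<omega>. g (X0 \<omega>) w) \<in> borel_measurable M"
proof (rule measurable_cong[THEN iffD1])
  show "(\<lambda>\<omega>. g_ext (w, X0 \<omega>)) \<in> borel_measurable M"
    using g_ext_measurable X0_meas by (simp add: borel_prod[symmetric])
qed (use X0_range in \<open>simp add: g_ext_eq\<close>)

lemma g_less_iff: "w \<in> Zs \<Longrightarrow> x \<in> Xs \<Longrightarrow> x' \<in> Xs \<Longrightarrow> g x w < g x' w \<longleftrightarrow> x < x'"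
  using g_mono1 by (metis linorder_neq_iff order_less_asym strict_mono_onD)

lemma g_le_iff: "w \<in> Zs \<Longrightarrow> x \<in> Xs \<Longrightarrow> x' \<in> Xs \<Longrightarrow> g x w \<le> g x' w \<longleftrightarrow> x \<le> x'"
  using g_less_iff by (meson not_le)

lemma g_eq_iff: "w \<in> Zs \<Longrightarrow> x \<in> Xs \<Longrightarrow> x' \<in> Xs \<Longrightarrow> g x w = g x' w \<longleftrightarrow> x = x'"
  using g_le_iff[of w x x'] g_le_iff[of w x' x] by auto

lemma isCont_WX: "isCont WX x"
  using WX_cont by (simp add: continuous_on_eq_continuous_at)

lemma prob_X0_ge: "prob {\<omega>\<in>space M. x \<le> X0 \<omega>} = 1 - WX x"
  using prob_ge_of_continuous_cdf[OF X0_meas _ isCont_WX] X0_cdf by simp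

lemma prob_g_X0_eq:
  assumes w: "w \<in> Zs"
  shows "prob {\<omega>\<in>space M. g (X0 \<omega>) w = y} = 0"
proof (cases "\<exists>x\<in>Xs. g x w = y")
  case True
  obtain x where x: "x \<in> Xs" "g x w = y" using True by auto
  have "{\<omega>\<in>space M. g (X0 \<omega>) w = y} = {\<omega>\<in>space M. X0 \<omega> = x}"
    using x X0_range g_eq_iff[OF w] by auto
  then show ?thesis using prob_eq_of_continuous_cdf[OF X0_meas _ isCont_WX] X0_cdf by simp
next
  case False
  then have "{\<omega>\<in>space M. g (X0 \<omega>) w = y} = {}" using X0_range by auto
  then show ?thesis by (metis measure_empty)
qed

text \<open>Fubini over the independent pair (Z, X0): a conditional probability given Z = w
  that does not depend on w is the unconditional one.\<close>
lemma prob_T0_eq_of_conditional: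
  assumes S: "S \<in> sets borel" and v: "\<And>w. w \<in> Zs \<Longrightarrow> prob {\<omega>\<in>space M. g (X0 \<omega>) w \<in> S} = v"
    and "0 \<le> v"
  shows "prob {\<omega>\<in>space M. T0 \<omega> \<in> S} = v"
proof -
  define PZ where "PZ = distr M borel Z"
  define PX where "PX = distr M borel X0"
  interpret PZ: prob_space PZ unfolding PZ_def by (rule prob_space_distr[OF Z_meas])
  interpret PX: prob_space PX unfolding PX_def by (rule prob_space_distr[OF X0_meas])
  have product: "PZ \<Otimes>\<^sub>M PX = distr M (borel \<Otimes>\<^sub>M borel) (\<lambda>\<omega>. (Z \<omega>, X0 \<omega>))"
    using Z_X0_indep unfolding PZ_def PX_def by (simp add: indep_var_distribution_eq)
  define D where "D = g_ext -` S"
  have D: "D \<in> sets (borel \<Otimes>\<^sub>M borel)"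
    using measurable_sets[OF g_ext_measurable S] unfolding D_def by (subst borel_prod) simp
  have "emeasure M {\<omega>\<in>space M. T0 \<omega> \<in> S} = emeasure M ((\<lambda>\<omega>. (Z \<omega>, X0 \<omega>)) -` D \<inter> space M)"
    using Z_range X0_range by (intro arg_cong[where f="emeasure M"]) (auto simp: D_def g_ext_eq T0_def)
  also have "\<dots> = emeasure (PZ \<Otimes>\<^sub>M PX) D"
    unfolding product using Z_meas X0_meas D by (simp add: emeasure_distr)
  also have "\<dots> = (\<integral>\<^sup>+w. emeasure PX (Pair w -` D) \<partial>PZ)"
    by (rule PX.emeasure_pair_measure_alt) (use D in \<open>simp add: PZ_def PX_def\<close>)
  also have "\<dots> = (\<integral>\<^sup>+w. ennreal v \<partial>PZ)"
  proof (rule nn_integral_cong_AE)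
    have "AE w in PZ. w \<in> Zs"
      unfolding PZ_def using Z_meas Zs_borel Z_range by (subst AE_distr_iff) (auto intro!: AE_I2)
    then show "AE w in PZ. emeasure PX (Pair w -` D) = ennreal v"
    proof (rule AE_mp, intro AE_I2 impI)
      fix w assume w: "w \<in> Zs"
      have "Pair w -` D \<in> sets borel" using D by (rule sets_Pair1[of _ borel borel, simplified])
      then have "emeasure PX (Pair w -` D) = emeasure M (X0 -` (Pair w -` D) \<inter> space M)"
        unfolding PX_def by (rule emeasure_distr[OF X0_meas])
      also have "X0 -` (Pair w -` D) \<inter> space M = {\<omega>\<in>space M. g (X0 \<omega>) w \<in> S}"
        using w X0_range by (auto simp: D_def g_ext_eq)
      also have "emeasure M \<dots> = ennreal v"
        using v[OF w] sets_Collect_borel_pred[OF g_X0_measurable[OF w], of "\<lambda>y. y \<in> S"] S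
        by (simp add: emeasure_eq_measure)
      finally show "emeasure PX (Pair w -` D) = ennreal v" .
    qed
  qed
  also have "\<dots> = ennreal v" by (simp add: PZ.emeasure_space_1)
  finally show ?thesis using \<open>0 \<le> v\<close> by (simp add: emeasure_eq_measure)
qed

lemma WT_eq_cdf: "WT = cdf (distr M borel T0)"
  using T0_cdf cdf_distr[OF T0_measurable] by (auto simp: T0_def)

lemma isCont_WT: "isCont WT y"
proof -
  interpret D: real_distribution "distr M borel T0" using T0_measurable by simp
  have "prob {\<omega>\<in>space M. T0 \<omega> \<in> {y}} = 0"
    using prob_g_X0_eq by (intro prob_T0_eq_of_conditional) auto
  then show ?thesis
    using T0_measurable by (simp add: WT_eq_cdf D.isCont_cdf measure_distr vimage_def Int_def conj_commute)
qed

lemma WT_mono: "x \<le> y \<Longrightarrow> WT x \<le> WT y"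
proof -
  interpret D: real_distribution "distr M borel T0" using T0_measurable by simp
  show "x \<le> y \<Longrightarrow> WT x \<le> WT y" unfolding WT_eq_cdf by (rule D.cdf_nondecreasing)
qed

lemma WT_at_top: "(WT \<longlongrightarrow> 1) at_top" and WT_at_bot: "(WT \<longlongrightarrow> 0) at_bot"
proof -
  interpret D: real_distribution "distr M borel T0" using T0_measurable by simp
  show "(WT \<longlongrightarrow> 1) at_top" "(WT \<longlongrightarrow> 0) at_bot"
    unfolding WT_eq_cdf by (rule D.cdf_lim_at_top_prob, rule D.cdf_lim_at_bot)
qed

lemma prob_T0_ge: "prob {\<omega>\<in>space M. y \<le> T0 \<omega>} = 1 - WT y"
  using prob_ge_of_continuous_cdf[OF T0_measurable _ isCont_WT] T0_cdf by (simp add: T0_def)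

definition "crit t = cdf_inv WT (1 - t)"

definition "pv w \<omega> = pvalue WT g (X0 \<omega>) w"

definition "pv_cdf w t = prob {\<omega>\<in>space M. pv w \<omega> \<le> t}"

lemma crit_le_iff: "t \<in> {0<..<1} \<Longrightarrow> 1 - t \<le> WT y \<longleftrightarrow> crit t \<le> y"
  and WT_crit: "t \<in> {0<..<1} \<Longrightarrow> WT (crit t) = 1 - t"
  using continuous_cdf_inv[OF isCont_WT WT_mono WT_at_top WT_at_bot, of "1 - t"]
  by (auto simp: crit_def)

lemma crit_antimono: "t \<in> {0<..<1} \<Longrightarrow> t' \<in> {0<..<1} \<Longrightarrow> t \<le> t' \<Longrightarrow> crit t' \<le> crit t"
  using crit_le_iff[of t "crit t"] crit_le_iff[of t' "crit t"] by simp

lemma pvalue_le_iff: "t \<in> {0<..<1} \<Longrightarrow> pvalue WT g x w \<le> t \<longleftrightarrow> crit t \<le> g x w"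
  using crit_le_iff[of t "g x w"] by (auto simp: pvalue_def)

lemma crit_in_Ts:
  assumes t: "t \<in> {0<..<1}"
  shows "crit t \<in> Ts"
proof -
  have T0_Ts: "T0 \<omega> \<in> Ts" if "\<omega> \<in> space M" for \<omega>
    using g_range X0_range Z_range that by (simp add: T0_def)
  have "prob {\<omega>\<in>space M. T0 \<omega> \<le> crit t} = 1 - t"
    using WT_crit[OF t] T0_cdf by (simp add: T0_def)
  then obtain \<omega>1 where \<omega>1: "\<omega>1 \<in> space M" "T0 \<omega>1 \<le> crit t"
    using t by (metis (mono_tags, lifting) Collect_empty_eq diff_gt_0_iff_gt greaterThanLessThan_iff
        less_irrefl measure_empty)
  have "prob {\<omega>\<in>space M. crit t \<le> T0 \<omega>} = t" using prob_T0_ge WT_crit[OF t] by simp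
  then obtain \<omega>2 where \<omega>2: "\<omega>2 \<in> space M" "crit t \<le> T0 \<omega>2"
    using t by (metis (mono_tags, lifting) Collect_empty_eq greaterThanLessThan_iff
        less_irrefl measure_empty)
  show ?thesis
    using intervals(3) T0_Ts[OF \<omega>1(1)] T0_Ts[OF \<omega>2(1)] \<omega>1(2) \<omega>2(2) unfolding is_interval_1 by blast
qed

lemma pv_measurable [measurable]: "w \<in> Zs \<Longrightarrow> pv w \<in> borel_measurable M"
  using g_X0_measurable borel_measurable_continuous_onI[of WT]
  unfolding pv_def pvalue_def by (simp add: isCont_WT continuous_at_imp_continuous_on)

lemma pv_bounds: "0 \<le> pv w \<omega>" "pv w \<omega> \<le> 1"
  using T0_cdf by (auto simp: pv_def pvalue_def)

lemma pv_cdf_eq: "w \<in> Zs \<Longrightarrow> t \<in> {0<..<1} \<Longrightarrow> pv_cdf w t = prob {\<omega>\<in>space M. crit t \<le> g (X0 \<omega>) w}"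
  unfolding pv_cdf_def pv_def using pvalue_le_iff by simp

lemma pv_cdf_bounds: "0 \<le> pv_cdf w t" "pv_cdf w t \<le> 1"
  by (auto simp: pv_cdf_def)

lemma pv_cdf_mono: "w \<in> Zs \<Longrightarrow> t \<le> t' \<Longrightarrow> pv_cdf w t \<le> pv_cdf w t'"
  unfolding pv_cdf_def by (intro finite_measure_mono) auto

lemma Finf_extension:
  assumes "w \<in> Zs"
  obtains F where "continuous_on {0..1} F" "F 0 = 0" "\<And>t. t \<in> {0<..<1} \<Longrightarrow> F t = Finf WX WT g1 w t"
  using Finf_extensible assms by blast

lemma pv_cdf_eq_Finf_if_attained:
  assumes w: "w \<in> Zs" and t: "t \<in> {0<..<1}" and x: "x \<in> Xs" "g x w = crit t"
  shows "pv_cdf w t = Finf WX WT g1 w t"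
proof -
  have "x = g1 (crit t) w" using g1_inv x w crit_in_Ts[OF t] by auto
  moreover have "{\<omega>\<in>space M. crit t \<le> g (X0 \<omega>) w} = {\<omega>\<in>space M. x \<le> X0 \<omega>}"
    using X0_range x g_le_iff[OF w] by force
  ultimately show ?thesis using pv_cdf_eq[OF w t] prob_X0_ge by (simp add: Finf_def crit_def)
qed

lemma Finf_zero_one_if_unattained:
  assumes w: "w \<in> Zs" and t: "t \<in> {0<..<1}" and unattained: "\<not> (\<exists>x\<in>Xs. g x w = crit t)"
  shows "Finf WX WT g1 w t = 0 \<or> Finf WX WT g1 w t = 1"
proof -
  define x where "x = g1 (crit t) w"
  have "x \<notin> Xs" using g1_inv w crit_in_Ts[OF t] unattained by (auto simp: x_def)
  \<comment> \<open>x lies outside the interval Xs, so X0 is almost surely on one side of it\<close>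
  then have "(\<forall>y\<in>Xs. y < x) \<or> (\<forall>y\<in>Xs. x < y)"
    using is_interval_Xs[of _ _ x] by (meson linorder_not_le)
  then have "{\<omega>\<in>space M. X0 \<omega> \<le> x} = space M \<or> {\<omega>\<in>space M. X0 \<omega> \<le> x} = {}"
    using X0_range by (force simp: not_le)
  then have "WX x = 1 \<or> WX x = 0" using X0_cdf prob_space by (metis measure_empty)
  then show ?thesis by (auto simp: Finf_def x_def crit_def)
qed

lemma g_below_or_above_crit:
  assumes w: "w \<in> Zs" and unattained: "\<not> (\<exists>x\<in>Xs. g x w = crit t)"
  shows "(\<forall>x\<in>Xs. g x w < crit t) \<or> (\<forall>x\<in>Xs. crit t < g x w)"
proof (rule ccontr)
  assume "\<not> ?thesis"
  then obtain x1 x2 where x: "x1 \<in> Xs" "crit t \<le> g x1 w" "x2 \<in> Xs" "g x2 w \<le> crit t"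
    by (auto simp: not_less)
  have "x2 \<le> x1" using g_le_iff[OF w x(3) x(1)] x by simp
  have sub: "{x2..x1} \<subseteq> Xs" using is_interval_Xs[OF x(3) x(1)] by auto
  have "continuous_on {x2..x1} (\<lambda>x. g x w)" using continuous_on_g_left[OF w] sub by (rule continuous_on_subset)
  then obtain x where "x2 \<le> x" "x \<le> x1" "g x w = crit t"
    using IVT'[of "\<lambda>x. g x w" x2 "crit t" x1] x \<open>x2 \<le> x1\<close> by auto
  then show False using unattained sub by auto
qed

lemma pv_cdf_eq_0_if_below:
  assumes "w \<in> Zs" "t \<in> {0<..<1}" "\<forall>x\<in>Xs. g x w < crit t"
  shows "pv_cdf w t = 0"
proof -
  have empty: "{\<omega>\<in>space M. crit t \<le> g (X0 \<omega>) w} = {}"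
    using X0_range assms(3) by (auto simp: not_less[symmetric])
  show ?thesis unfolding pv_cdf_eq[OF assms(1,2)] empty by simp
qed

lemma pv_cdf_eq_1_if_above:
  assumes "w \<in> Zs" "t \<in> {0<..<1}" "\<forall>x\<in>Xs. crit t < g x w"
  shows "pv_cdf w t = 1"
proof -
  have "{\<omega>\<in>space M. crit t \<le> g (X0 \<omega>) w} = space M" using X0_range assms by (force simp: less_imp_le)
  then show ?thesis using assms by (simp add: pv_cdf_eq prob_space)
qed

text \<open>A difference at t0 forces crit t0 outside the range of g(., w), where both functions
  are 0 or 1.  Below the range, Finf would be 1 at t0 while taking only the values 0 and 1
  on (0, t0] and tending to 0 at 0, contradicting its continuity.\<close>
lemma above_crit_if_pv_cdf_ne_Finf:
  assumes w: "w \<in> Zs" and t0: "t0 \<in> {0<..<1}" and ne: "pv_cdf w t0 \<noteq> Finf WX WT g1 w t0"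
  shows "\<forall>x\<in>Xs. crit t0 < g x w" and "Finf WX WT g1 w t0 = 0"
proof -
  obtain F where F: "continuous_on {0..1} F" "F 0 = 0" "\<And>t. t \<in> {0<..<1} \<Longrightarrow> F t = Finf WX WT g1 w t"
    using Finf_extension[OF w] by blast
  have unattained: "\<not> (\<exists>x\<in>Xs. g x w = crit t0)"
    using pv_cdf_eq_Finf_if_attained[OF w t0] ne by metis
  have F01: "F t0 = 0 \<or> F t0 = 1"
    using Finf_zero_one_if_unattained[OF w t0 unattained] F(3)[OF t0] by simp
  have "\<not> (\<forall>x\<in>Xs. g x w < crit t0)"
  proof
    assume below: "\<forall>x\<in>Xs. g x w < crit t0"
    then have "F t0 = 1" using pv_cdf_eq_0_if_below[OF w t0] ne F01 F(3)[OF t0] by auto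
    moreover have "continuous_on {0..t0} F" by (rule continuous_on_subset[OF F(1)]) (use t0 in auto)
    ultimately obtain s where s: "0 \<le> s" "s \<le> t0" "F s = 1/2"
      using IVT'[of F 0 "1/2" t0] F(2) t0 by auto
    then have "s \<in> {0<..<1}" using F(2) t0 by (cases "s = 0") auto
    moreover have "\<not> (\<exists>x\<in>Xs. g x w = crit s)"
      using crit_antimono[OF \<open>s \<in> {0<..<1}\<close> t0 s(2)] below by force
    ultimately have "F s = 0 \<or> F s = 1" using Finf_zero_one_if_unattained[OF w] F(3) by simp
    then show False using s(3) by simp
  qed
  then show above: "\<forall>x\<in>Xs. crit t0 < g x w"
    using g_below_or_above_crit[OF w unattained] by auto
  show "Finf WX WT g1 w t0 = 0"
    using pv_cdf_eq_1_if_above[OF w t0 above] ne F01 F(3)[OF t0] by auto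
qed

text \<open>In the same situation the p-value c.d.f. only takes the values 0 and 1: where crit t is
  attained it agrees with the continuous Finf, which ends at 0 in t0, and it is nondecreasing.\<close>
lemma pv_cdf_zero_one_if_ne_Finf:
  assumes w: "w \<in> Zs" and t0: "t0 \<in> {0<..<1}" and ne: "pv_cdf w t0 \<noteq> Finf WX WT g1 w t0"
    and t: "t \<in> {0<..<1}"
  shows "pv_cdf w t = 0 \<or> pv_cdf w t = 1"
proof (cases "\<exists>x\<in>Xs. g x w = crit t")
  case False
  then show ?thesis
    using g_below_or_above_crit[OF w False] pv_cdf_eq_0_if_below[OF w t] pv_cdf_eq_1_if_above[OF w t]
    by auto
next
  case True
  obtain F where F: "continuous_on {0..1} F" "\<And>t. t \<in> {0<..<1} \<Longrightarrow> F t = Finf WX WT g1 w t"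
    using Finf_extension[OF w] by blast
  note above = above_crit_if_pv_cdf_ne_Finf[OF w t0 ne]
  obtain x where x: "x \<in> Xs" "g x w = crit t" using True by auto
  show ?thesis
  proof (rule ccontr)
    define v where "v = pv_cdf w t"
    assume "\<not> ?thesis"
    then have v: "0 < v" "v < 1" using pv_cdf_bounds[of w t] by (auto simp: v_def)
    have "t < t0"
    proof (rule ccontr)
      assume "\<not> t < t0"
      then have "crit t \<le> crit t0" using crit_antimono[OF t0 t] by simp
      then show False using above(1) x by force
    qed
    have "F t = v" using pv_cdf_eq_Finf_if_attained[OF w t x] F(2)[OF t] by (simp add: v_def)
    moreover have "continuous_on {t..t0} F" by (rule continuous_on_subset[OF F(1)]) (use t t0 in auto)
    ultimately obtain s where s: "t \<le> s" "s \<le> t0" "F s = v / 2"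
      using IVT2'[of F t0 "v / 2" t] F(2)[OF t0] above(2) v \<open>t < t0\<close> by auto
    have s01: "s \<in> {0<..<1}" using s t t0 by auto
    have "v \<le> pv_cdf w s" using pv_cdf_mono[OF w s(1)] by (simp add: v_def)
    moreover have "pv_cdf w s = F s \<or> F s = 0 \<or> F s = 1"
      using pv_cdf_eq_Finf_if_attained[OF w s01] Finf_zero_one_if_unattained[OF w s01] F(2)[OF s01]
      by (cases "\<exists>x\<in>Xs. g x w = crit s") auto
    ultimately show False using s(3) v by auto
  qed
qed

lemma AE_pv_eq_if_pv_cdf_step:
  assumes w: "w \<in> Zs" and c: "0 \<le> c" "c < 1"
    and above: "\<And>t. t \<in> {c<..<1} \<Longrightarrow> pv_cdf w t = 1"
    and below: "\<And>t. t \<in> {0<..<c} \<Longrightarrow> pv_cdf w t = 0"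
  shows "AE \<omega> in M. pv w \<omega> = c"
proof -
  have [measurable]: "pv w \<in> borel_measurable M" using w by simp
  have upper: "AE \<omega> in M. pv w \<omega> \<le> c + 1 / real (Suc k)" for k
  proof (cases "c + 1 / real (Suc k) < 1")
    case True
    then have "prob {\<omega>\<in>space M. pv w \<omega> \<le> c + 1 / real (Suc k)} = 1"
      using above[of "c + 1 / real (Suc k)"] by (simp add: pv_cdf_def)
    then show ?thesis by (rule AE_prob_1[THEN AE_mp]) (auto intro!: AE_I2)
  next
    case False
    then show ?thesis by (intro AE_I2) (meson not_less order.trans pv_bounds(2))
  qed
  have lower: "AE \<omega> in M. c - 1 / real (Suc k) \<le> pv w \<omega>" for k
  proof (cases "0 < c - 1 / real (Suc k)")
    case True
    then have "prob {\<omega>\<in>space M. pv w \<omega> \<le> c - 1 / real (Suc k)} = 0"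
      using below[of "c - 1 / real (Suc k)"] by (simp add: pv_cdf_def)
    then have "AE \<omega> in M. \<not> pv w \<omega> \<le> c - 1 / real (Suc k)"
      by (subst AE_iff_measurable[OF _ refl]) (auto simp: emeasure_eq_measure)
    then show ?thesis by (rule AE_mp) (auto intro!: AE_I2)
  next
    case False
    then show ?thesis by (intro AE_I2) (meson not_less order.trans pv_bounds(1))
  qed
  have "AE \<omega> in M. \<forall>k. c - 1 / real (Suc k) \<le> pv w \<omega> \<and> pv w \<omega> \<le> c + 1 / real (Suc k)"
    using upper lower by (subst AE_all_countable) (auto intro: AE_conjI)
  then show ?thesis
  proof (rule AE_mp, intro AE_I2 impI)
    fix \<omega> assume bounds: "\<forall>k. c - 1 / real (Suc k) \<le> pv w \<omega> \<and> pv w \<omega> \<le> c + 1 / real (Suc k)"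
    have "(\<lambda>k. c + 1 / real (Suc k)) \<longlonglongrightarrow> c + 0" "(\<lambda>k. c - 1 / real (Suc k)) \<longlonglongrightarrow> c - 0"
      by (intro tendsto_intros LIMSEQ_inverse_real_of_nat[unfolded inverse_eq_divide])+
    then have "pv w \<omega> \<le> c" "c \<le> pv w \<omega>"
      using bounds by (auto intro: LIMSEQ_le_const LIMSEQ_le_const2)
    then show "pv w \<omega> = c" by simp
  qed
qed

definition "pv_atom c w = prob {\<omega>\<in>space M. pv w \<omega> = c}"

lemma pv_atom_bounds: "0 \<le> pv_atom c w" "pv_atom c w \<le> 1"
  by (auto simp: pv_atom_def)

lemma pv_atom_le_pv_cdf: "w \<in> Zs \<Longrightarrow> c \<le> s \<Longrightarrow> pv_atom c w \<le> pv_cdf w s"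
  unfolding pv_atom_def pv_cdf_def by (intro finite_measure_mono) auto

lemma pv_cdf_add_pv_atom_le:
  assumes w: "w \<in> Zs" and "s < c" "c \<le> s'"
  shows "pv_cdf w s + pv_atom c w \<le> pv_cdf w s'"
proof -
  have [measurable]: "pv w \<in> borel_measurable M" using w by simp
  have "pv_cdf w s + pv_atom c w = prob ({\<omega>\<in>space M. pv w \<omega> \<le> s} \<union> {\<omega>\<in>space M. pv w \<omega> = c})"
    unfolding pv_cdf_def pv_atom_def using \<open>s < c\<close>
    by (intro finite_measure_Union[symmetric]) auto
  also have "\<dots> \<le> pv_cdf w s'" unfolding pv_cdf_def
    using \<open>s < c\<close> \<open>c \<le> s'\<close> by (intro finite_measure_mono) auto
  finally show ?thesis .
qed

lemma pv_atom_eq_1_if_AE: "w \<in> Zs \<Longrightarrow> AE \<omega> in M. pv w \<omega> = c \<Longrightarrow> pv_atom c w = 1"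
  unfolding pv_atom_def by (subst prob_eq_1) auto

lemma pv_atom_eq_0_if_pv_cdf_eq_Finf:
  assumes w: "w \<in> Zs" and c: "0 \<le> c" "c < 1"
    and eq: "\<And>s. s \<in> {0<..<1} \<Longrightarrow> pv_cdf w s = Finf WX WT g1 w s"
  shows "pv_atom c w = 0"
proof (rule ccontr)
  assume "pv_atom c w \<noteq> 0"
  then have m: "pv_atom c w > 0" using pv_atom_bounds[of c w] by auto
  obtain F where F: "continuous_on {0..1} F" "F 0 = 0" "\<And>t. t \<in> {0<..<1} \<Longrightarrow> F t = Finf WX WT g1 w t"
    using Finf_extension[OF w] by blast
  have GF: "pv_cdf w s = F s" if "s \<in> {0<..<1}" for s using eq that F(3) by auto
  obtain d where d: "d > 0" "\<And>s. s \<in> {0..1} \<Longrightarrow> dist s c < d \<Longrightarrow> dist (F s) (F c) < pv_atom c w / 2"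
    using F(1)[unfolded continuous_on_iff, rule_format, of c "pv_atom c w / 2"] m c by auto
  \<comment> \<open>an atom at c would be a jump of the continuous function F at c\<close>
  show False
  proof (cases "c = 0")
    case True
    define s where "s = min d 1 / 2"
    have s: "s \<in> {0<..<1}" "s < d" using d by (auto simp: s_def)
    have "pv_atom c w \<le> F s" using pv_atom_le_pv_cdf[OF w, of c s] GF[OF s(1)] s True by simp
    also have "F s < pv_atom c w / 2" using d(2)[of s] s True F(2) by (auto simp: dist_real_def)
    finally show False using m by simp
  next
    case False
    define \<delta> where "\<delta> = min d (min c (1 - c)) / 2"
    have \<delta>: "0 < \<delta>" "\<delta> < d" "\<delta> < c" "\<delta> < 1 - c" using d False c by (auto simp: \<delta>_def)
    have "F (c - \<delta>) + pv_atom c w \<le> F (c + \<delta>)"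
      using pv_cdf_add_pv_atom_le[OF w, of "c - \<delta>" c "c + \<delta>"] GF[of "c - \<delta>"] GF[of "c + \<delta>"] \<delta> c
      by simp
    moreover have "\<bar>F (c - \<delta>) - F c\<bar> < pv_atom c w / 2" "\<bar>F (c + \<delta>) - F c\<bar> < pv_atom c w / 2"
      using d(2)[of "c - \<delta>"] d(2)[of "c + \<delta>"] \<delta> c by (auto simp: dist_real_def)
    ultimately show False by linarith
  qed
qed

lemma pv_atom_zero_one_if_pv_cdf_zero_one:
  assumes w: "w \<in> Zs" and c: "0 \<le> c" "c < 1"
    and zero_one: "\<And>s. s \<in> {0<..<1} \<Longrightarrow> pv_cdf w s = 0 \<or> pv_cdf w s = 1"
  shows "pv_atom c w = 0 \<or> pv_atom c w = 1"
proof (rule ccontr)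
  assume "\<not> ?thesis"
  then have m: "pv_atom c w > 0" "pv_atom c w < 1" using pv_atom_bounds[of c w] by auto
  have "pv_cdf w t = 1" if "t \<in> {c<..<1}" for t
    using pv_atom_le_pv_cdf[OF w, of c t] zero_one[of t] that c m by auto
  moreover have "pv_cdf w t = 0" if t: "t \<in> {0<..<c}" for t
  proof -
    have "pv_cdf w t + pv_atom c w \<le> pv_cdf w ((1 + c) / 2)"
      using t c by (intro pv_cdf_add_pv_atom_le[OF w]) auto
    then show ?thesis using pv_cdf_bounds[of w "(1 + c) / 2"] zero_one[of t] t c m by auto
  qed
  ultimately have "AE \<omega> in M. pv w \<omega> = c" by (rule AE_pv_eq_if_pv_cdf_step[OF w c])
  then show False using pv_atom_eq_1_if_AE[OF w] m by simp
qed

lemma AE_g_X0_ne: "w \<in> Zs \<Longrightarrow> AE \<omega> in M. g (X0 \<omega>) w \<noteq> y"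
  using prob_g_X0_eq[of w y] g_X0_measurable[of w]
  by (subst AE_iff_measurable[OF _ refl]) (auto simp: emeasure_eq_measure)

lemma AE_not_extreme_in_level_set:
  assumes w: "w \<in> Zs"
  shows "AE \<omega> in M. WT (g (X0 \<omega>) w) = v \<longrightarrow> (\<exists>y'<g (X0 \<omega>) w. WT y' = v) \<and> (\<exists>y'>g (X0 \<omega>) w. WT y' = v)"
proof -
  have extreme: "AE \<omega> in M. WT (g (X0 \<omega>) w) = v \<longrightarrow> (\<exists>y'. WT y' = v \<and> R y' (g (X0 \<omega>) w))"
    if R: "\<And>x y. R x y \<or> x = y \<or> R y x" for R :: "real \<Rightarrow> real \<Rightarrow> bool"
  proof (cases "\<exists>y0. WT y0 = v \<and> (\<forall>y'. WT y' = v \<longrightarrow> \<not> R y' y0)")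
    case True
    then obtain y0 where y0: "WT y0 = v" "\<forall>y'. WT y' = v \<longrightarrow> \<not> R y' y0" by blast
    show ?thesis
    proof (rule AE_mp[OF AE_g_X0_ne[OF w, of y0]], intro AE_I2 impI)
      fix \<omega> assume "g (X0 \<omega>) w \<noteq> y0" "WT (g (X0 \<omega>) w) = v"
      then show "\<exists>y'. WT y' = v \<and> R y' (g (X0 \<omega>) w)" using y0 R by metis
    qed
  qed (intro AE_I2, blast)
  have "AE \<omega> in M. WT (g (X0 \<omega>) w) = v \<longrightarrow> (\<exists>y'. WT y' = v \<and> y' < g (X0 \<omega>) w)"
    and "AE \<omega> in M. WT (g (X0 \<omega>) w) = v \<longrightarrow> (\<exists>y'. WT y' = v \<and> y' > g (X0 \<omega>) w)"
    by (rule extreme; auto)+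
  then show ?thesis by eventually_elim blast
qed

lemma continuous_on_pv_atom: "continuous_on Zs (pv_atom c)"
proof (rule continuous_on_sequentiallyI)
  fix u a assume u: "\<forall>n. u n \<in> Zs" and a: "a \<in> Zs" and lim: "u \<longlonglongrightarrow> a"
  define J where "J = {y. WT y = 1 - c}"
  have "closed J" unfolding J_def using isCont_WT
    by (intro closed_Collect_eq continuous_intros) (simp add: continuous_at_imp_continuous_on)
  then have [measurable]: "J \<in> sets borel" by (rule borel_closed)
  have [measurable]: "(\<lambda>\<omega>. g (X0 \<omega>) w) \<in> borel_measurable M" if "w \<in> Zs" for w
    using that by (rule g_X0_measurable)
  have atom_integral: "pv_atom c w = (\<integral>\<omega>. indicator J (g (X0 \<omega>) w) \<partial>M :: real)" if "w \<in> Zs" for w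
  proof -
    have "(\<integral>\<omega>. indicator J (g (X0 \<omega>) w) \<partial>M) = (\<integral>\<omega>. indicator {\<omega>\<in>space M. pv w \<omega> = c} \<omega> \<partial>M)"
      by (rule Bochner_Integration.integral_cong) (auto simp: indicator_def J_def pv_def pvalue_def)
    also have "\<dots> = prob {\<omega>\<in>space M. pv w \<omega> = c}"
      by (simp add: Int_absorb2 subset_iff)
    finally show ?thesis by (simp add: pv_atom_def)
  qed
  have ind_meas: "(\<lambda>\<omega>. indicator J (g (X0 \<omega>) w) :: real) \<in> borel_measurable M" if "w \<in> Zs" for w
    using that by measurable
  have pointwise: "AE \<omega> in M. (\<lambda>i. indicator J (g (X0 \<omega>) (u i)) :: real) \<longlonglongrightarrow> indicator J (g (X0 \<omega>) a)"
    using AE_not_extreme_in_level_set[OF a, of "1 - c"] AE_space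
  proof eventually_elim
    case (elim \<omega>)
    have "X0 \<omega> \<in> Xs" using X0_range elim(2) by auto
    then have "(\<lambda>i. g (X0 \<omega>) (u i)) \<longlonglongrightarrow> g (X0 \<omega>) a"
      using u a by (intro continuous_on_tendsto_compose[OF continuous_on_g_right lim]) auto
    then show ?case unfolding J_def using elim(1)
      by (intro tendsto_indicator_level_set[OF WT_mono isCont_WT]) auto
  qed
  have "(\<lambda>i. \<integral>\<omega>. indicator J (g (X0 \<omega>) (u i)) \<partial>M) \<longlonglongrightarrow> (\<integral>\<omega>. indicator J (g (X0 \<omega>) a) \<partial>M :: real)"
    by (rule integral_dominated_convergence[where w="\<lambda>_. 1", OF ind_meas[OF a] ind_meas _ pointwise])
      (use u in \<open>auto intro!: AE_I2 simp: indicator_def\<close>)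
  then show "(\<lambda>n. pv_atom c (u n)) \<longlonglongrightarrow> pv_atom c a" using u a by (simp add: atom_integral)
qed

lemma pv_atom_zero_one:
  assumes w: "w \<in> Zs" and c: "0 \<le> c" "c < 1"
  shows "pv_atom c w = 0 \<or> pv_atom c w = 1"
proof (cases "\<forall>s\<in>{0<..<1}. pv_cdf w s = Finf WX WT g1 w s")
  case True
  then show ?thesis using pv_atom_eq_0_if_pv_cdf_eq_Finf[OF w c] by simp
next
  case False
  then obtain s where "s \<in> {0<..<1}" "pv_cdf w s \<noteq> Finf WX WT g1 w s" by auto
  then show ?thesis
    using pv_atom_zero_one_if_pv_cdf_zero_one[OF w c] pv_cdf_zero_one_if_ne_Finf[OF w] by blast
qed

lemma pv_atom_eq_1_everywhere:
  assumes z: "z \<in> Zs" and c: "0 \<le> c" "c < 1" and "pv_atom c z = 1" and w: "w \<in> Zs"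
  shows "pv_atom c w = 1"
proof (rule ccontr)
  assume "pv_atom c w \<noteq> 1"
  then have "pv_atom c w = 0" using pv_atom_zero_one[OF w c] by simp
  have sub: "{min w z..max w z} \<subseteq> Zs"
    using is_interval_Zs[of "min w z" "max w z"] z w by (auto simp: min_def max_def)
  \<comment> \<open>a continuous function with values in {0, 1} on the interval Zs is constant\<close>
  have "continuous_on {min w z..max w z} (pv_atom c)"
    using sub by (rule continuous_on_subset[OF continuous_on_pv_atom])
  then obtain x where "x \<in> {min w z..max w z}" "pv_atom c x = 1 / 2"
    using IVT'[of "pv_atom c" "min w z" "1/2" "max w z"] IVT2'[of "pv_atom c" "max w z" "1/2" "min w z"]
      \<open>pv_atom c z = 1\<close> \<open>pv_atom c w = 0\<close> by (cases "w \<le> z") (auto simp: min_def max_def)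
  then show False using pv_atom_zero_one[of x c] c sub by auto
qed

lemma pv_atom_eq_1_if_pv_cdf_zero_one:
  assumes w: "w \<in> Zs" and t: "t \<in> {0<..<1}" "pv_cdf w t = 1"
    and zero_one: "\<And>s. s \<in> {0<..<1} \<Longrightarrow> pv_cdf w s = 0 \<or> pv_cdf w s = 1"
  obtains c where "0 \<le> c" "c < 1" "pv_atom c w = 1"
proof -
  define C where "C = {s\<in>{0<..<1}. pv_cdf w s = 1}"
  define c where "c = Inf C"
  have "t \<in> C" using t by (simp add: C_def)
  have bdd: "bdd_below C" unfolding C_def by (rule bdd_belowI[of _ 0]) auto
  have "0 \<le> c" unfolding c_def using \<open>t \<in> C\<close> by (intro cInf_greatest) (auto simp: C_def)
  have "c < 1" using cInf_lower[OF \<open>t \<in> C\<close> bdd] t by (simp add: c_def)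
  have "pv_cdf w s = 1" if s: "s \<in> {c<..<1}" for s
  proof -
    obtain s' where "s' \<in> C" "s' < s" using cInf_lessD[of C s] \<open>t \<in> C\<close> s by (auto simp: c_def)
    then show ?thesis using pv_cdf_mono[OF w, of s' s] pv_cdf_bounds[of w s] by (auto simp: C_def)
  qed
  moreover have "pv_cdf w s = 0" if s: "s \<in> {0<..<c}" for s
  proof -
    have "s \<notin> C" using cInf_lower[OF _ bdd, of s] s by (auto simp: c_def)
    then show ?thesis using zero_one[of s] s \<open>c < 1\<close> by (auto simp: C_def)
  qed
  ultimately have "AE \<omega> in M. pv w \<omega> = c" using \<open>0 \<le> c\<close> \<open>c < 1\<close> by (intro AE_pv_eq_if_pv_cdf_step[OF w])
  then show ?thesis using that \<open>0 \<le> c\<close> \<open>c < 1\<close> pv_atom_eq_1_if_AE[OF w] by blast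
qed

text \<open>If the two differed, some p-value would be degenerate; by continuity of its atom in the parameter all
  of them would be degenerate at the same point c < 1, so that the unconditional statistic T0
  would reject at level (1 + c) / 2 with probability one.\<close>
lemma pv_cdf_eq_Finf:
  assumes z: "z \<in> Zs" and t: "t \<in> {0<..<1}"
  shows "pv_cdf z t = Finf WX WT g1 z t"
proof (rule ccontr)
  assume ne: "pv_cdf z t \<noteq> Finf WX WT g1 z t"
  have "pv_cdf z t = 1"
    using pv_cdf_eq_1_if_above[OF z t] above_crit_if_pv_cdf_ne_Finf[OF z t ne] by simp
  then obtain c where c: "0 \<le> c" "c < 1" "pv_atom c z = 1"
    using pv_atom_eq_1_if_pv_cdf_zero_one[OF z t] pv_cdf_zero_one_if_ne_Finf[OF z t ne] by blast
  define t1 where "t1 = (1 + c) / 2"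
  have t1: "t1 \<in> {0<..<1}" "c \<le> t1" using c by (auto simp: t1_def)
  have "prob {\<omega>\<in>space M. crit t1 \<le> g (X0 \<omega>) w} = 1" if w: "w \<in> Zs" for w
    using pv_atom_le_pv_cdf[OF w t1(2)] pv_atom_eq_1_everywhere[OF z c w] pv_cdf_bounds[of w t1]
      pv_cdf_eq[OF w t1(1)] by linarith
  then have "prob {\<omega>\<in>space M. T0 \<omega> \<in> {crit t1..}} = 1" by (intro prob_T0_eq_of_conditional) auto
  moreover have "prob {\<omega>\<in>space M. crit t1 \<le> T0 \<omega>} = t1" using prob_T0_ge WT_crit[OF t1(1)] by simp
  ultimately show False using t1 by simp
qed

lemma pvalue_le_iff_mem:
  assumes z: "z \<in> Zs" and t: "t \<in> {0<..<1}"
  shows "{x \<in> Xs. crit t \<le> g x z} \<in> sets borel"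
    and "x \<in> Xs \<Longrightarrow> pvalue WT g x z \<le> t \<longleftrightarrow> x \<in> {x \<in> Xs. crit t \<le> g x z}"
proof -
  have "is_interval {x \<in> Xs. crit t \<le> g x z}"
    unfolding is_interval_1
  proof (intro ballI allI impI, elim conjE)
    fix a b x assume a: "a \<in> {x \<in> Xs. crit t \<le> g x z}" and b: "b \<in> {x \<in> Xs. crit t \<le> g x z}"
      and "a \<le> x" "x \<le> b"
    then have "x \<in> Xs" using is_interval_Xs by blast
    then show "x \<in> {x \<in> Xs. crit t \<le> g x z}" using g_le_iff[OF z, of a x] a \<open>a \<le> x\<close> by auto
  qed
  then show "{x \<in> Xs. crit t \<le> g x z} \<in> sets borel" by (rule real_interval_borel_measurable)
  show "x \<in> Xs \<Longrightarrow> pvalue WT g x z \<le> t \<longleftrightarrow> x \<in> {x \<in> Xs. crit t \<le> g x z}"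
    using pvalue_le_iff[OF t] by simp
qed

lemma prob_pvalue_le_eq_Finf:
  assumes z: "z \<in> Zs" and t: "t \<in> {0<..<1}"
    and X: "X \<in> borel_measurable M" "\<And>\<omega>. \<omega> \<in> space M \<Longrightarrow> X \<omega> \<in> Xs"
    and cdf: "\<And>x. WX x = prob {\<omega>\<in>space M. X \<omega> \<le> x}"
  shows "prob {\<omega>\<in>space M. pvalue WT g (X \<omega>) z \<le> t} = Finf WX WT g1 z t"
proof -
  define B where "B = {x \<in> Xs. crit t \<le> g x z}"
  note B = pvalue_le_iff_mem[OF z t, folded B_def]
  have "distr M borel X = distr M borel X0"
    using X(1) X0_meas cdf X0_cdf cdf_distr[OF X(1)] cdf_distr[OF X0_meas]
    by (intro cdf_unique) auto
  then have "prob (X -` B \<inter> space M) = prob (X0 -` B \<inter> space M)"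
    using X(1) X0_meas B(1) by (metis measure_distr)
  moreover have "X -` B \<inter> space M = {\<omega>\<in>space M. pvalue WT g (X \<omega>) z \<le> t}"
    using B(2) X(2) by auto
  moreover have "X0 -` B \<inter> space M = {\<omega>\<in>space M. pv z \<omega> \<le> t}"
    using B(2) X0_range by (auto simp: pv_def)
  ultimately show ?thesis using pv_cdf_eq_Finf[OF z t] by (simp add: pv_cdf_def)
qed

lemma AE_tendsto_pvalue_ecdf:
  fixes X :: "nat \<Rightarrow> nat \<Rightarrow> 'a \<Rightarrow> real" and I :: "nat \<Rightarrow> nat set"
  assumes I: "\<And>n. I n \<subseteq> {..<n}" and lim: "(\<lambda>n. real (card (I n)) / real n) \<longlonglongrightarrow> \<zeta>"
    and indep: "\<And>n. indep_vars (\<lambda>_. borel) (X n) (I n)"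
    and range: "\<And>n i \<omega>. i \<in> I n \<Longrightarrow> \<omega> \<in> space M \<Longrightarrow> X n i \<omega> \<in> Xs"
    and cdf: "\<And>n i x. i \<in> I n \<Longrightarrow> WX x = prob {\<omega>\<in>space M. X n i \<omega> \<le> x}"
    and z: "z \<in> Zs" and t: "t \<in> {0<..<1}"
  shows "AE \<omega> in M. (\<lambda>n. real (card {i\<in>I n. pvalue WT g (X n i \<omega>) z \<le> t}) / real n)
                      \<longlonglongrightarrow> \<zeta> * Finf WX WT g1 z t"
proof -
  define B where "B = {x \<in> Xs. crit t \<le> g x z}"
  note B = pvalue_le_iff_mem[OF z t, folded B_def]
  define Y where "Y n i \<omega> = (indicator B (X n i \<omega>) :: real)" for n i \<omega>
  have fin: "finite (I n)" for n using I finite_subset by blast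
  have card: "card (I n) \<le> n" for n using card_mono[OF _ I[of n]] by simp
  have X_meas: "X n i \<in> borel_measurable M" if "i \<in> I n" for n i
    using indep[of n] that unfolding indep_vars_def by auto
  have indep_Y: "indep_vars (\<lambda>_. borel) (Y n) (I n)" for n
    unfolding Y_def by (rule indep_vars_compose2[OF indep]) (use B(1) in measurable)
  have mean_Y: "expectation (Y n i) = Finf WX WT g1 z t" if i: "i \<in> I n" for n i
  proof -
    have "expectation (Y n i) = expectation (indicator (X n i -` B \<inter> space M))"
      by (rule Bochner_Integration.integral_cong) (auto simp: Y_def indicator_def)
    also have "\<dots> = prob (X n i -` B \<inter> space M)" by simp
    also have "X n i -` B \<inter> space M = {\<omega>\<in>space M. pvalue WT g (X n i \<omega>) z \<le> t}"
      using B(2) range[OF i] by auto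
    finally show ?thesis using prob_pvalue_le_eq_Finf[OF z t X_meas[OF i] range[OF i] cdf[OF i]] by simp
  qed
  have "AE \<omega> in M. (\<lambda>n. (\<Sum>i\<in>I n. Y n i \<omega>) / real n - real (card (I n)) / real n
      * Finf WX WT g1 z t) \<longlonglongrightarrow> 0"
    by (rule AE_tendsto_triangular_mean[OF fin card indep_Y _ mean_Y]) (simp add: Y_def)
  then show ?thesis using AE_space
  proof eventually_elim
    case (elim \<omega>)
    have "{i\<in>I n. X n i \<omega> \<in> B} = {i\<in>I n. pvalue WT g (X n i \<omega>) z \<le> t}" for n
      using B(2) range[OF _ elim(2)] by auto
    then have "(\<Sum>i\<in>I n. Y n i \<omega>) = real (card {i\<in>I n. pvalue WT g (X n i \<omega>) z \<le> t})" for n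
      using fin[of n] by (simp add: Y_def indicator_def sum.If_cases Int_def conj_commute)
    moreover have "(\<lambda>n. ((\<Sum>i\<in>I n. Y n i \<omega>) / real n - real (card (I n)) / real n * Finf WX WT g1 z t)
        + real (card (I n)) / real n * Finf WX WT g1 z t) \<longlonglongrightarrow> 0 + \<zeta> * Finf WX WT g1 z t"
      by (intro tendsto_add elim(1) tendsto_mult lim tendsto_const)
    ultimately show ?case by simp
  qed
qed

lemma continuous_on_Finf: "w \<in> Zs \<Longrightarrow> continuous_on {0<..<1} (Finf WX WT g1 w)"
  using Finf_extension continuous_on_subset[of "{0..1}" _ "{0<..<1}"]
  by (metis (no_types, lifting) continuous_on_cong greaterThanLessThan_subseteq_atLeastAtMost_iff order.refl)

lemma Finf_bounds: "0 \<le> Finf WX WT g1 w t \<and> Finf WX WT g1 w t \<le> 1"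
  using X0_cdf by (simp add: Finf_def)

end

theorem theorem2p1:
  fixes M :: "'a measure" and \<alpha> \<zeta> :: real and Xs Zs Ts :: "real set"
    and g g1 :: "real \<Rightarrow> real \<Rightarrow> real" and WX WT WZ :: "real \<Rightarrow> real"
    and X :: "nat \<Rightarrow> nat \<Rightarrow> 'a \<Rightarrow> real" and Z :: "'a \<Rightarrow> real"
    and I0 :: "nat \<Rightarrow> nat set" and z :: real
  assumes M: "prob_space M"
    and alpha: "0 < \<alpha>" "\<alpha> < 1"
    and intervals: "is_interval Xs" "is_interval Zs" "is_interval Ts"
    and g_cont: "continuous_on (Xs \<times> Zs) (\<lambda>(x, w). g x w)"
    and g_range: "\<forall>x\<in>Xs. \<forall>w\<in>Zs. g x w \<in> Ts"
    and g_mono1: "\<forall>w\<in>Zs. strict_mono_on Xs (\<lambda>x. g x w)"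
    and g_mono2: "(\<forall>x\<in>Xs. strict_mono_on Zs (g x)) \<or> (\<forall>x\<in>Xs. strict_antimono_on Zs (g x))
                  \<or> (\<forall>x\<in>Xs. \<forall>w\<in>Zs. \<forall>w'\<in>Zs. g x w = g x w')"
    and g1_inv: "\<forall>x\<in>Xs. \<forall>w\<in>Zs. \<forall>t\<in>Ts. (g x w = t \<longleftrightarrow> x = g1 t w)"
    and g2_inv: "((\<forall>x\<in>Xs. strict_mono_on Zs (g x)) \<or> (\<forall>x\<in>Xs. strict_antimono_on Zs (g x)))
                 \<longrightarrow> (\<exists>g2 :: real \<Rightarrow> real \<Rightarrow> real. \<forall>x\<in>Xs. \<forall>w\<in>Zs. \<forall>t\<in>Ts. (g x w = t \<longleftrightarrow> w = g2 x t))"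
    and Z_meas: "Z \<in> borel_measurable M"
    and Z_range: "\<forall>\<omega>\<in>space M. Z \<omega> \<in> Zs"
    and WZ_cdf: "\<forall>w. WZ w = measure M {\<omega> \<in> space M. Z \<omega> \<le> w}"
    and WZ_cont: "continuous_on UNIV WZ"
    and X_meas: "\<forall>n. \<forall>i<n. X n i \<in> borel_measurable M"
    and indep: "\<forall>n. prob_space.indep_vars M (\<lambda>_. borel)
                  (\<lambda>j. case j of None \<Rightarrow> Z | Some i \<Rightarrow> X n i) (insert None (Some ` {..<n}))"
    and I0_sub: "\<forall>n. I0 n \<subseteq> {..<n}"
    and X_true_range: "\<forall>n. \<forall>i\<in>I0 n. \<forall>\<omega>\<in>space M. X n i \<omega> \<in> Xs"
    and WX_cdf: "\<forall>n. \<forall>i\<in>I0 n. \<forall>x. WX x = measure M {\<omega> \<in> space M. X n i \<omega> \<le> x}"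
    and WX_cont: "continuous_on UNIV WX"
    and WT_cdf: "\<forall>n. \<forall>i\<in>I0 n. \<forall>t. WT t = measure M {\<omega> \<in> space M. g (X n i \<omega>) (Z \<omega>) \<le> t}"
    and false_p0: "\<forall>n. \<forall>i<n. i \<notin> I0 n \<longrightarrow> (\<forall>w\<in>Zs. AE \<omega> in M. pvalue WT g (X n i \<omega>) w = 0)"
    and Finf_ext: "\<forall>w\<in>Zs. \<exists>F. continuous_on {0..1} F \<and> F 0 = 0
                    \<and> (\<forall>t\<in>{0<..<1}. F t = Finf WX WT g1 w t)
                    \<and> (\<exists>d. (F has_real_derivative d) (at 0 within {0..1}))"
    and zeta: "0 < \<zeta>" "\<zeta> < 1"
    and zeta_lim: "(\<lambda>n. real (card (I0 n)) / real n) \<longlonglongrightarrow> \<zeta>"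
    and standing: "measure M {\<omega> \<in> space M. Z \<omega> \<in> Dset \<alpha> (Finf WX WT g1) \<zeta> Zs} = 1"
    and z: "z \<in> Dset \<alpha> (Finf WX WT g1) \<zeta> Zs"
  shows "(AE \<omega> in M. (\<lambda>n. real (card (lsu_rejected \<alpha> n (\<lambda>i. pvalue WT g (X n i \<omega>) z) \<inter> I0 n))
                          / real n)
           \<longlonglongrightarrow> tcross \<alpha> (Finf WX WT g1 z) \<zeta> / \<alpha> - (1 - \<zeta>)) \<and>
         (AE \<omega> in M. (\<lambda>n. real (card (lsu_rejected \<alpha> n (\<lambda>i. pvalue WT g (X n i \<omega>) z) \<inter> I0 n))
                          / real (max (card (lsu_rejected \<alpha> n (\<lambda>i. pvalue WT g (X n i \<omega>) z))) 1))
           \<longlonglongrightarrow> 1 - \<alpha> * (1 - \<zeta>) / tcross \<alpha> (Finf WX WT g1 z) \<zeta>)"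
proof -
  interpret prob_space M by (rule M)
  have z: "z \<in> Zs" and lcp: "is_LCP \<alpha> (Finf WX WT g1 z) \<zeta>" using z by (auto simp: Dset_def)
  \<comment> \<open>the null model is read off any true null hypothesis; some I0 n is nonempty since \<zeta> > 0\<close>
  obtain n1 where "0 < real (card (I0 n1)) / real n1"
    using order_tendstoD(1)[OF zeta_lim zeta(1)] by (auto simp: eventually_sequentially)
  then obtain i1 where i1: "i1 \<in> I0 n1" by (auto simp: zero_less_divide_iff card_gt_0_iff)
  have "i1 < n1" using I0_sub i1 by auto
  have "\<forall>w\<in>Zs. \<exists>F. continuous_on {0..1} F \<and> F 0 = 0 \<and> (\<forall>t\<in>{0<..<1}. F t = Finf WX WT g1 w t)"
    using Finf_ext by blast
  moreover have "X n1 i1 \<in> borel_measurable M" using X_meas \<open>i1 < n1\<close> by simp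
  moreover have "indep_var borel Z borel (X n1 i1)"
    using indep \<open>i1 < n1\<close> by (intro indep_var_None_Some) auto
  ultimately interpret null_pvalue_model M Xs Zs Ts g g1 WX WT "X n1 i1" Z
    using X_true_range WX_cdf WT_cdf i1
    by (intro null_pvalue_model.intro null_pvalue_model_axioms.intro M intervals g_cont g_range g_mono1
        g1_inv Z_meas Z_range WX_cont) auto
  have "AE \<omega> in M. \<forall>t\<in>\<rat> \<inter> {0<..<1}.
      (\<lambda>n. real (card {i\<in>I0 n. pvalue WT g (X n i \<omega>) z \<le> t}) / real n) \<longlonglongrightarrow> \<zeta> * Finf WX WT g1 z t"
    using I0_sub X_true_range WX_cdf z
    by (subst AE_ball_countable)
      (auto intro!: AE_tendsto_pvalue_ecdf zeta_lim indep_vars_Some[OF indep[rule_format]]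
        countable_rat countable_Int1)
  moreover have "AE \<omega> in M. \<forall>n i. i < n \<longrightarrow> i \<notin> I0 n \<longrightarrow> pvalue WT g (X n i \<omega>) z = 0"
    using false_p0 z by (simp add: AE_all_countable)
  ultimately show ?thesis
    unfolding AE_conj_iff[symmetric]
  proof eventually_elim
    case (elim \<omega>)
    show ?case
      using elim I0_sub Finf_bounds
      by (intro conjI lsu_asymptotics[OF alpha zeta _ zeta_lim continuous_on_Finf[OF z] _ _ _ lcp]) auto
  qed
qed

end
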